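(* Consider the static single-object erasure-coded Byzantine read/write protocol described in the context over a set $C$ of flexnodes, at most $b<\frac{|C|-k}{3}$ of which are Byzantine, and suppose at most $\delta$ write operations are concurrent with any read. Then every execution of the protocol implements an atomic (linearizable) read/write register: letting $\Pi$ be the set of complete read/write operations of the execution, there is an irreflexive partial order $\prec$ on $\Pi$ such that (A1) for $\pi_1,\pi_2\in\Pi$, if $\pi_1$ completes before $\pi_2$ is invoked then not $\pi_2\prec\pi_1$; (A2) if $\pi\in\Pi$ is a write and $\pi'\in\Pi$ is any operation, then $\pi\prec\pi'$ or $\pi'\prec\pi$; (A3) every read returns the value written by the last write preceding it according to $\prec$, or the initial value $v_0$ if there is no such write.
   Context: Model. $C$ is a fixed finite set of processes ("flexnodes") over asynchronous reliable channels (messages between nonfaulty processes eventually delivered unaltered). Up to $b$ flexnodes may be Byzantine. Processes invoking reads/writes follow the protocol but may crash. Signatures are unforgeable. An $[n,k]$ RLNC code with $n=|C|$: $\mathrm{Encode}(v)$ produces $|C|$ coded elements, any $k$ of which (from the same encoding) recover $v$. Tags are pairs $(z,w)$, $z\in\mathbb{N}$, $w$ a unique writer identifier from a totally ordered set, ordered lexicographically; $\langle t_0,v_0\rangle$ is the initial tag-value pair. A parameter $\delta\ge1$ is fixed. A quorum is any subset of $C$ of size $\lceil (2|C|+k)/3\rceil$. State. Each flexnode keeps a set $List$ of signed triples $(\langle t,e\rangle,\sigma)$, initially holding the initial pair with tag $t_0$. Primitives (by flexnode $p$): get-tag: query all, each replies with its signed max-tag entry, wait for replies from a quorum, return the maximum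 tag among replies with valid signatures. put-data$(\langle t,v\rangle)$: encode $v$ into $e_1,\dots,e_{|C|}$, send $\langle t,e_j\rangle$ signed by $p$ to the $j$-th flexnode; a receiver adds it to $List$ if the signature verifies and no entry with tag $t$ exists, then if $|List|>\delta+1$ removes the entries with minimum tag, and acknowledges; $p$ waits for a quorum of acknowledgements. get-data: query all, each replies with its $List$, wait for a quorum, keep verified pairs, take the maximum tag appearing in at least $k$ received lists, decode the value from its coded elements and return the pair; if none exists the primitive does not complete. Operations: read = get-data returning $\langle t,v\rangle$, then put-data$(\langle t,v\rangle)$, then return $v$ (with tag $t$); write$(v)$ by writer $w$ = get-tag returning $t$, then put-data$(\langle (t.z+1,w),v\rangle)$. Executions are well-formed (each process invokes an operation only after its previous one completes) and fair. An operation is complete if both its invocation and response appear in the execution.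
   Formalization: $\Pi$ consists of the complete operations together with some chosen set of incomplete writes, and signed triples carry a recipient index j: flexnode j stores, and a reader accepts from flexnode j, only those with index j. The statement above fails without it. *)

theory Defs
  imports Complex_Main "HOL-Library.Product_Lexorder"
begin

text \<open>Writer / reader identifiers ('w) are the clients invoking operations.
  A signed triple is modelled by its content (tag, recipient index j, coded element);
  unforgeability of signatures is modelled by a global set of validly signed triples,
  which only protocol-following clients (and the initial configuration) extend.\<close>

type_synonym 'w tag = "nat \<times> 'w"
type_synonym ('n,'w,'e) entry = "'w tag \<times> 'n \<times> 'e"

definition etag :: "('n,'w,'e) entry \<Rightarrow> 'w tag" where "etag e = fst e"
definition eidx :: "('n,'w,'e) entry \<Rightarrow> 'n" where "eidx e = fst (snd e)"
definition eelem :: "('n,'w,'e) entry \<Rightarrow> 'e" where "eelem e = snd (snd e)"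

datatype ('n,'w) sender = Cl 'w | Nd 'n

text \<open>Messages to flexnodes (round numbers identify the phase of the client).\<close>
datatype ('n,'w,'e) nmsg = QTag nat | QData nat | Put nat "('n,'w,'e) entry"

text \<open>Messages to clients. RTag None stands for a reply whose signature does not verify.\<close>
datatype ('n,'w,'e) cmsg = RTag nat "('n,'w,'e) entry option"
  | RData nat "('n,'w,'e) entry set" | Ack nat

datatype ('n,'w,'v,'e) phase =
    Idle
  | WTag nat 'v "'n \<rightharpoonup> 'w tag option"   \<comment> \<open>get-tag of a write: round, value, replies\<close>
  | WPut nat "'n set"                     \<comment> \<open>put-data of a write: round, acks\<close>
  | RGet nat "'n \<rightharpoonup> ('n,'w,'e) entry set" \<comment> \<open>get-data of a read: round, verified lists\<close>
  | RPut nat 'v "'n set"                  \<comment> \<open>put-data of a read: round, value to return, acks\<close>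

record ('n,'w,'v,'e) gstate =
  lists :: "'n \<Rightarrow> ('n,'w,'e) entry set"
  signed :: "('n,'w,'e) entry set"
  toNode :: "('n \<times> ('n,'w) sender \<times> ('n,'w,'e) nmsg) set"
  toClient :: "('w \<times> 'n \<times> ('n,'w,'e) cmsg) set"
  phs :: "'w \<Rightarrow> ('n,'w,'v,'e) phase"
  rnd :: "'w \<Rightarrow> nat"

definition quorum_size :: "nat \<Rightarrow> nat \<Rightarrow> nat" where
  "quorum_size n k = nat \<lceil>(2 * real n + real k) / 3\<rceil>"

definition mds_code :: "'n set \<Rightarrow> nat \<Rightarrow> ('v \<Rightarrow> 'n \<Rightarrow> 'e) \<Rightarrow> (('n \<times> 'e) set \<Rightarrow> 'v) \<Rightarrow> bool" where
  "mds_code C k enc dec \<longleftrightarrow>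
     (\<forall>v X. X \<subseteq> (\<lambda>j. (j, enc v j)) ` C \<and> k \<le> card X \<longrightarrow> dec X = v)"

definition init_state :: "'n set \<Rightarrow> ('v \<Rightarrow> 'n \<Rightarrow> 'e) \<Rightarrow> 'v \<Rightarrow> 'w \<Rightarrow> ('n,'w,'v,'e) gstate" where
  "init_state C enc v0 w0 =
     \<lparr> lists = (\<lambda>j. {((0, w0), j, enc v0 j)}),
       signed = {((0, w0), j, enc v0 j) | j. j \<in> C},
       toNode = {}, toClient = {}, phs = (\<lambda>_. Idle), rnd = (\<lambda>_. 0) \<rparr>"

definition max_entry :: "('n,'w::linorder,'e) entry set \<Rightarrow> ('n,'w,'e) entry" where
  "max_entry L = (SOME e. e \<in> L \<and> (\<forall>e'\<in>L. etag e' \<le> etag e))"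

definition prune :: "nat \<Rightarrow> ('n,'w::linorder,'e) entry set \<Rightarrow> ('n,'w,'e) entry set" where
  "prune \<delta> L = (if card L > \<delta> + 1 then L - {e \<in> L. etag e = Min (etag ` L)} else L)"

definition store :: "nat \<Rightarrow> 'n \<Rightarrow> ('n,'w::linorder,'e) entry set \<Rightarrow> ('n,'w,'e) entry
                      \<Rightarrow> ('n,'w,'e) entry set \<Rightarrow> ('n,'w,'e) entry set" where
  "store \<delta> j S e L =
     (if e \<in> S \<and> eidx e = j \<and> (\<forall>e'\<in>L. etag e' \<noteq> etag e) then prune \<delta> (insert e L) else L)"

definition node_recv :: "nat \<Rightarrow> 'n \<Rightarrow> ('n,'w) sender \<Rightarrow> ('n,'w,'e) nmsg
                          \<Rightarrow> ('n,'w::linorder,'v,'e) gstate \<Rightarrow> ('n,'w,'v,'e) gstate" where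
  "node_recv \<delta> j src m s =
    (case m of
       QTag r \<Rightarrow> (case src of
           Cl c \<Rightarrow> s\<lparr>toClient := insert (c, j, RTag r (Some (max_entry (lists s j)))) (toClient s)\<rparr>
         | Nd _ \<Rightarrow> s)
     | QData r \<Rightarrow> (case src of
           Cl c \<Rightarrow> s\<lparr>toClient := insert (c, j, RData r (lists s j)) (toClient s)\<rparr>
         | Nd _ \<Rightarrow> s)
     | Put r e \<Rightarrow>
         (let s1 = s\<lparr>lists := (lists s)(j := store \<delta> j (signed s) e (lists s j))\<rparr> in
          case src of
            Cl c \<Rightarrow> s1\<lparr>toClient := insert (c, j, Ack r) (toClient s1)\<rparr>
          | Nd _ \<Rightarrow> s1))"

definition node_step :: "'n set \<Rightarrow> 'n set \<Rightarrow> nat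
                          \<Rightarrow> ('n,'w::linorder,'v,'e) gstate \<Rightarrow> ('n,'w,'v,'e) gstate \<Rightarrow> bool" where
  "node_step C Byz \<delta> s s' \<longleftrightarrow>
     (\<exists>j src m. j \<in> C - Byz \<and> (j, src, m) \<in> toNode s \<and>
        s' = node_recv \<delta> j src m (s\<lparr>toNode := toNode s - {(j, src, m)}\<rparr>))"

text \<open>A Byzantine flexnode sends an arbitrary message; it cannot forge signatures, so every
  signed triple it sends must already be validly signed (invalid ones are just junk).\<close>
definition byz_client_ok :: "('n,'w,'e) entry set \<Rightarrow> ('n,'w,'e) cmsg \<Rightarrow> bool" where
  "byz_client_ok S m = (case m of
       RTag r eo \<Rightarrow> (\<forall>e. eo = Some e \<longrightarrow> e \<in> S)
     | RData r X \<Rightarrow> X \<subseteq> S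
     | Ack r \<Rightarrow> True)"

definition byz_node_ok :: "('n,'w,'e) entry set \<Rightarrow> ('n,'w,'e) nmsg \<Rightarrow> bool" where
  "byz_node_ok S m = (case m of Put r e \<Rightarrow> e \<in> S | _ \<Rightarrow> True)"

definition byz_step :: "'n set \<Rightarrow> 'n set \<Rightarrow> ('n,'w,'v,'e) gstate \<Rightarrow> ('n,'w,'v,'e) gstate \<Rightarrow> bool" where
  "byz_step C Byz s s' \<longleftrightarrow>
     (\<exists>j \<in> Byz.
        (\<exists>c m. byz_client_ok (signed s) m \<and> s' = s\<lparr>toClient := insert (c, j, m) (toClient s)\<rparr>)
      \<or> (\<exists>i m. i \<in> C \<and> byz_node_ok (signed s) m \<and> s' = s\<lparr>toNode := insert (i, Nd j, m) (toNode s)\<rparr>))"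

definition start_put :: "'n set \<Rightarrow> ('v \<Rightarrow> 'n \<Rightarrow> 'e) \<Rightarrow> 'w \<Rightarrow> 'w tag \<Rightarrow> 'v
                          \<Rightarrow> (nat \<Rightarrow> ('n,'w,'v,'e) phase)
                          \<Rightarrow> ('n,'w,'v,'e) gstate \<Rightarrow> ('n,'w,'v,'e) gstate" where
  "start_put C enc c t v ph s =
     (let r = Suc (rnd s c) in
      s\<lparr>signed := signed s \<union> {(t, j, enc v j) | j. j \<in> C},
        toNode := toNode s \<union> {(j, Cl c, Put r (t, j, enc v j)) | j. j \<in> C},
        rnd := (rnd s)(c := r),
        phs := (phs s)(c := ph r)\<rparr>)"

definition inv_write :: "'n set \<Rightarrow> ('n,'w,'v,'e) gstate \<Rightarrow> ('n,'w,'v,'e) gstate \<Rightarrow> bool" where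
  "inv_write C s s' \<longleftrightarrow>
     (\<exists>c v. phs s c = Idle \<and>
        s' = (let r = Suc (rnd s c) in
              s\<lparr>rnd := (rnd s)(c := r), phs := (phs s)(c := WTag r v Map.empty),
                toNode := toNode s \<union> {(j, Cl c, QTag r) | j. j \<in> C}\<rparr>))"

definition inv_read :: "'n set \<Rightarrow> ('n,'w,'v,'e) gstate \<Rightarrow> ('n,'w,'v,'e) gstate \<Rightarrow> bool" where
  "inv_read C s s' \<longleftrightarrow>
     (\<exists>c. phs s c = Idle \<and>
        s' = (let r = Suc (rnd s c) in
              s\<lparr>rnd := (rnd s)(c := r), phs := (phs s)(c := RGet r Map.empty),
                toNode := toNode s \<union> {(j, Cl c, QData r) | j. j \<in> C}\<rparr>))"

definition candidate_tags :: "nat \<Rightarrow> ('n \<rightharpoonup> ('n,'w,'e) entry set) \<Rightarrow> 'w tag set" where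
  "candidate_tags k M = {t. k \<le> card {i \<in> dom M. \<exists>e \<in> the (M i). etag e = t}}"

definition client_recv :: "'n set \<Rightarrow> nat \<Rightarrow> ('v \<Rightarrow> 'n \<Rightarrow> 'e) \<Rightarrow> (('n \<times> 'e) set \<Rightarrow> 'v)
                            \<Rightarrow> 'w \<Rightarrow> 'n \<Rightarrow> ('n,'w,'e) cmsg
                            \<Rightarrow> ('n,'w::linorder,'v,'e) gstate \<Rightarrow> ('n,'w,'v,'e) gstate" where
  "client_recv C k enc dec c j m s =
    (let q = quorum_size (card C) k in
     case phs s c of
       WTag r v M \<Rightarrow>
         (case m of
            RTag r' eo \<Rightarrow>
              (if r' = r \<and> j \<notin> dom M \<and> card (dom M) < q then
                 (let M' = M(j \<mapsto> (case eo of Some e \<Rightarrow> (if e \<in> signed s then Some (etag e) else None)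
                                              | None \<Rightarrow> None)) in
                  if card (dom M') = q then
                    (let t = Max {t. \<exists>i. M' i = Some (Some t)} in
                     start_put C enc c (Suc (fst t), c) v (\<lambda>r. WPut r {}) s)
                  else s\<lparr>phs := (phs s)(c := WTag r v M')\<rparr>)
               else s)
          | _ \<Rightarrow> s)
     | WPut r A \<Rightarrow>
         (case m of
            Ack r' \<Rightarrow>
              (if r' = r \<and> j \<notin> A \<and> card A < q then
                 (if card (insert j A) = q then s\<lparr>phs := (phs s)(c := Idle)\<rparr>
                  else s\<lparr>phs := (phs s)(c := WPut r (insert j A))\<rparr>)
               else s)
          | _ \<Rightarrow> s)
     | RGet r M \<Rightarrow>
         (case m of
            RData r' S \<Rightarrow>
              (if r' = r \<and> j \<notin> dom M \<and> card (dom M) < q then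
                 (let M' = M(j \<mapsto> {e \<in> S. e \<in> signed s \<and> eidx e = j}) in
                  if card (dom M') = q \<and> candidate_tags k M' \<noteq> {} then
                    (let t = Max (candidate_tags k M');
                         v = dec {(eidx e, eelem e) | e. e \<in> \<Union>(ran M') \<and> etag e = t} in
                     start_put C enc c t v (\<lambda>r. RPut r v {}) s)
                  else s\<lparr>phs := (phs s)(c := RGet r M')\<rparr>)
               else s)
          | _ \<Rightarrow> s)
     | RPut r v A \<Rightarrow>
         (case m of
            Ack r' \<Rightarrow>
              (if r' = r \<and> j \<notin> A \<and> card A < q then
                 (if card (insert j A) = q then s\<lparr>phs := (phs s)(c := Idle)\<rparr>
                  else s\<lparr>phs := (phs s)(c := RPut r v (insert j A))\<rparr>)
               else s)
          | _ \<Rightarrow> s)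
     | Idle \<Rightarrow> s)"

definition client_step :: "'n set \<Rightarrow> nat \<Rightarrow> ('v \<Rightarrow> 'n \<Rightarrow> 'e) \<Rightarrow> (('n \<times> 'e) set \<Rightarrow> 'v)
                            \<Rightarrow> ('n,'w::linorder,'v,'e) gstate \<Rightarrow> ('n,'w,'v,'e) gstate \<Rightarrow> bool" where
  "client_step C k enc dec s s' \<longleftrightarrow>
     (\<exists>c j m. (c, j, m) \<in> toClient s \<and>
        s' = client_recv C k enc dec c j m (s\<lparr>toClient := toClient s - {(c, j, m)}\<rparr>))"

definition next_step :: "'n set \<Rightarrow> 'n set \<Rightarrow> nat \<Rightarrow> nat \<Rightarrow> ('v \<Rightarrow> 'n \<Rightarrow> 'e) \<Rightarrow> (('n \<times> 'e) set \<Rightarrow> 'v)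
                          \<Rightarrow> ('n,'w::linorder,'v,'e) gstate \<Rightarrow> ('n,'w,'v,'e) gstate \<Rightarrow> bool" where
  "next_step C Byz k \<delta> enc dec s s' \<longleftrightarrow>
     s' = s \<or> inv_write C s s' \<or> inv_read C s s' \<or> node_step C Byz \<delta> s s'
     \<or> client_step C k enc dec s s' \<or> byz_step C Byz s s'"

text \<open>An execution: an infinite sequence of global states (finite executions are padded by
  stuttering steps). No fairness is imposed (atomicity is a safety property).\<close>
definition execution :: "'n set \<Rightarrow> 'n set \<Rightarrow> nat \<Rightarrow> nat \<Rightarrow> ('v \<Rightarrow> 'n \<Rightarrow> 'e) \<Rightarrow> (('n \<times> 'e) set \<Rightarrow> 'v)
                          \<Rightarrow> 'v \<Rightarrow> 'w \<Rightarrow> (nat \<Rightarrow> ('n,'w::linorder,'v,'e) gstate) \<Rightarrow> bool" where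
  "execution C Byz k \<delta> enc dec v0 w0 run \<longleftrightarrow>
     run 0 = init_state C enc v0 w0 \<and> (\<forall>i. next_step C Byz k \<delta> enc dec (run i) (run (Suc i)))"

text \<open>An operation is identified by (client c, step index i of its invocation).\<close>
type_synonym 'w op = "'w \<times> nat"

definition invoked :: "(nat \<Rightarrow> ('n,'w,'v,'e) gstate) \<Rightarrow> 'w \<Rightarrow> nat \<Rightarrow> bool" where
  "invoked run c i \<longleftrightarrow> phs (run i) c = Idle \<and> phs (run (Suc i)) c \<noteq> Idle"

definition responds :: "(nat \<Rightarrow> ('n,'w,'v,'e) gstate) \<Rightarrow> 'w \<Rightarrow> nat \<Rightarrow> bool" where
  "responds run c j \<longleftrightarrow> phs (run j) c \<noteq> Idle \<and> phs (run (Suc j)) c = Idle"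

definition ops :: "(nat \<Rightarrow> ('n,'w,'v,'e) gstate) \<Rightarrow> 'w op set" where
  "ops run = {(c, i). invoked run c i}"

definition complete :: "(nat \<Rightarrow> ('n,'w,'v,'e) gstate) \<Rightarrow> 'w op \<Rightarrow> bool" where
  "complete run \<pi> \<longleftrightarrow> (\<exists>j > snd \<pi>. responds run (fst \<pi>) j)"

definition resp_time :: "(nat \<Rightarrow> ('n,'w,'v,'e) gstate) \<Rightarrow> 'w op \<Rightarrow> nat" where
  "resp_time run \<pi> = (LEAST j. snd \<pi> < j \<and> responds run (fst \<pi>) j)"

definition completes_before :: "(nat \<Rightarrow> ('n,'w,'v,'e) gstate) \<Rightarrow> 'w op \<Rightarrow> 'w op \<Rightarrow> bool" where
  "completes_before run \<pi>1 \<pi>2 \<longleftrightarrow> complete run \<pi>1 \<and> resp_time run \<pi>1 < snd \<pi>2"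

definition concurrent :: "(nat \<Rightarrow> ('n,'w,'v,'e) gstate) \<Rightarrow> 'w op \<Rightarrow> 'w op \<Rightarrow> bool" where
  "concurrent run \<pi>1 \<pi>2 \<longleftrightarrow> \<not> completes_before run \<pi>1 \<pi>2 \<and> \<not> completes_before run \<pi>2 \<pi>1"

definition is_write :: "(nat \<Rightarrow> ('n,'w,'v,'e) gstate) \<Rightarrow> 'w op \<Rightarrow> bool" where
  "is_write run \<pi> \<longleftrightarrow> (\<exists>r v M. phs (run (Suc (snd \<pi>))) (fst \<pi>) = WTag r v M)"

definition is_read :: "(nat \<Rightarrow> ('n,'w,'v,'e) gstate) \<Rightarrow> 'w op \<Rightarrow> bool" where
  "is_read run \<pi> \<longleftrightarrow> (\<exists>r M. phs (run (Suc (snd \<pi>))) (fst \<pi>) = RGet r M)"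

definition written_val :: "(nat \<Rightarrow> ('n,'w,'v,'e) gstate) \<Rightarrow> 'w op \<Rightarrow> 'v" where
  "written_val run \<pi> = (case phs (run (Suc (snd \<pi>))) (fst \<pi>) of WTag r v M \<Rightarrow> v)"

text \<open>Value returned by a complete read operation (held in its put-data phase at its response).\<close>
definition returned_val :: "(nat \<Rightarrow> ('n,'w,'v,'e) gstate) \<Rightarrow> 'w op \<Rightarrow> 'v" where
  "returned_val run \<pi> = (case phs (run (resp_time run \<pi>)) (fst \<pi>) of RPut r v A \<Rightarrow> v)"

definition bounded_write_concurrency :: "nat \<Rightarrow> (nat \<Rightarrow> ('n,'w,'v,'e) gstate) \<Rightarrow> bool" where
  "bounded_write_concurrency \<delta> run \<longleftrightarrow>
     (\<forall>\<rho> \<in> ops run. is_read run \<rho> \<longrightarrow>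
        finite {\<omega> \<in> ops run. is_write run \<omega> \<and> concurrent run \<omega> \<rho>} \<and>
        card {\<omega> \<in> ops run. is_write run \<omega> \<and> concurrent run \<omega> \<rho>} \<le> \<delta>)"

subsection \<open>Atomicity (Lynch-style, with incomplete writes possibly completed)\<close>

definition atomic_register :: "'v \<Rightarrow> (nat \<Rightarrow> ('n,'w,'v,'e) gstate) \<Rightarrow> bool" where
  "atomic_register v0 run \<longleftrightarrow>
    (\<exists>W prec.
       W \<subseteq> {\<omega> \<in> ops run. is_write run \<omega> \<and> \<not> complete run \<omega>} \<and>
       (let \<Pi> = {\<pi> \<in> ops run. complete run \<pi>} \<union> W in
         prec \<subseteq> \<Pi> \<times> \<Pi> \<and> (\<forall>\<pi>\<in>\<Pi>. (\<pi>, \<pi>) \<notin> prec) \<and> trans prec \<and>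
         \<comment> \<open>(A1)\<close>
         (\<forall>\<pi>1\<in>\<Pi>. \<forall>\<pi>2\<in>\<Pi>. completes_before run \<pi>1 \<pi>2 \<longrightarrow> (\<pi>2, \<pi>1) \<notin> prec) \<and>
         \<comment> \<open>(A2)\<close>
         (\<forall>\<pi>\<in>\<Pi>. \<forall>\<pi>'\<in>\<Pi>. is_write run \<pi> \<and> \<pi> \<noteq> \<pi>' \<longrightarrow> (\<pi>, \<pi>') \<in> prec \<or> (\<pi>', \<pi>) \<in> prec) \<and>
         \<comment> \<open>(A3)\<close>
         (\<forall>\<rho>\<in>\<Pi>. is_read run \<rho> \<longrightarrow>
            (\<exists>\<omega>\<in>\<Pi>. is_write run \<omega> \<and> (\<omega>, \<rho>) \<in> prec \<and>
               (\<forall>\<omega>'\<in>\<Pi>. is_write run \<omega>' \<and> (\<omega>', \<rho>) \<in> prec \<longrightarrow> \<omega>' = \<omega> \<or> (\<omega>', \<omega>) \<in> prec) \<and>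
               returned_val run \<rho> = written_val run \<omega>)
          \<or> ((\<forall>\<omega>\<in>\<Pi>. is_write run \<omega> \<longrightarrow> (\<omega>, \<rho>) \<notin> prec) \<and> returned_val run \<rho> = v0))))"

end

theory Submission
  imports Defs
begin

(*
  Every operation gets the tag stored by its put-data phase; operations are ordered by tag, a
  write before the reads with the same tag.  Since 3 b + k < |C|, two quorums share more than
  k honest flexnodes.  When a put-data phase completes, every honest flexnode of its quorum
  covers the tag: its list contains the tag or more than \<delta> larger ones, and pruning, which
  drops the minimum only when more than \<delta> + 1 tags are held, preserves this.  Hence a later
  get-tag sees a tag at least as large, and the write picks a strictly larger one.  A later
  read sees the tag itself in more than k honest lists, because those lists hold at most \<delta>
  tags above the largest tag of the operations completed before the read (each such tag
  belongs to a write concurrent with the read); so that tag is a decoding candidate and the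
  read adopts a tag at least as large.  Finally, signatures force all coded elements with one
  tag to come from the unique write with that tag (or from the initial value), so a read
  returns the value of the write whose tag it adopts.
*)

section \<open>Tags covered by a pruned list\<close>

definition covers :: "nat \<Rightarrow> 'a::linorder set \<Rightarrow> 'a \<Rightarrow> bool" where
  "covers d X t \<longleftrightarrow> t \<in> X \<or> d + 1 \<le> card {x \<in> X. t < x}"

lemma covers_insert:
  assumes "finite X" "covers d X t"
  shows "covers d (insert x X) t"
proof -
  have "card {y \<in> X. t < y} \<le> card {y \<in> insert x X. t < y}"
    using assms(1) by (intro card_mono) auto
  then show ?thesis using assms(2) unfolding covers_def by auto
qed

lemma covers_Diff_Min:
  assumes "finite X" "covers d X t" "d + 1 < card X"
  shows "covers d (X - {Min X}) t"
proof (cases "t \<le> Min X")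
  case True
  have "t < x" if "x \<in> X - {Min X}" for x
  proof -
    have "Min X \<le> x" using that assms(1) by simp
    then have "Min X < x" using that by (auto intro: le_neq_trans)
    with True show ?thesis by (rule le_less_trans)
  qed
  then have "{x \<in> X - {Min X}. t < x} = X - {Min X}" by blast
  moreover have "card (X - {Min X}) = card X - 1"
    using assms(1,3) by (intro card_Diff_singleton Min_in) auto
  ultimately have "card {x \<in> X - {Min X}. t < x} = card X - 1" by simp
  then show ?thesis using assms(3) unfolding covers_def by linarith
next
  case False
  then have "{x \<in> X - {Min X}. t < x} = {x \<in> X. t < x}" by auto
  then show ?thesis using assms(2) False unfolding covers_def by auto
qed

lemma covers_imp_ex_ge:
  assumes "covers d X t"
  shows "\<exists>x \<in> X. t \<le> x"
proof (cases "t \<in> X")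
  case False
  then have "0 < card {x \<in> X. t < x}" using assms unfolding covers_def by auto
  then have "{x \<in> X. t < x} \<noteq> {}" by (metis card.empty less_irrefl)
  then show ?thesis by (auto intro: less_imp_le)
qed auto

lemma covers_imp_mem:
  "covers d X t \<Longrightarrow> card {x \<in> X. t < x} \<le> d \<Longrightarrow> t \<in> X"
  unfolding covers_def by linarith

lemma prune_subset: "prune d L \<subseteq> L"
  by (auto simp: prune_def)

lemma etag_prune:
  assumes "finite L" "inj_on etag L"
  shows "etag ` prune d L =
    (if d + 1 < card (etag ` L) then etag ` L - {Min (etag ` L)} else etag ` L)"
  using assms by (auto simp: prune_def card_image)

lemma prune_nonempty:
  assumes "finite L" "inj_on etag L" "L \<noteq> {}"
  shows "prune d L \<noteq> {}"
proof -
  have "etag ` L - {Min (etag ` L)} \<noteq> {}" if "d + 1 < card (etag ` L)"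
  proof -
    have "0 < card (etag ` L - {Min (etag ` L)})"
      using that by (simp add: card_Diff_singleton_if)
    then show ?thesis by force
  qed
  then have "etag ` prune d L \<noteq> {}" using etag_prune[OF assms(1,2), of d] assms(3) by auto
  then show ?thesis by blast
qed

lemma covers_prune:
  assumes "finite L" "inj_on etag L" "covers d (etag ` L) t"
  shows "covers d (etag ` prune d L) t"
  using assms covers_Diff_Min[of "etag ` L" d t] by (simp add: etag_prune)

lemma store_subset: "store d j S e L \<subseteq> L \<union> ({e} \<inter> {e \<in> S. eidx e = j})"
  using prune_subset by (auto simp: store_def)

lemma store_fresh:
  "e \<in> S \<Longrightarrow> eidx e = j \<Longrightarrow> \<forall>e' \<in> L. etag e' \<noteq> etag e \<Longrightarrow>
    store d j S e L = prune d (insert e L)"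
  by (simp add: store_def)

lemma store_stale:
  "\<not> (e \<in> S \<and> eidx e = j \<and> (\<forall>e' \<in> L. etag e' \<noteq> etag e)) \<Longrightarrow> store d j S e L = L"
  unfolding store_def by meson

lemma store_wf:
  assumes "finite L" "inj_on etag L" "L \<noteq> {}"
  shows "finite (store d j S e L) \<and> inj_on etag (store d j S e L) \<and> store d j S e L \<noteq> {}"
proof (cases "e \<in> S \<and> eidx e = j \<and> (\<forall>e' \<in> L. etag e' \<noteq> etag e)")
  case True
  have inj: "inj_on etag (insert e L)" using True assms(2) by (auto simp: inj_on_def)
  have fin: "finite (insert e L)" using assms by auto
  have "store d j S e L = prune d (insert e L)" using True by (intro store_fresh) auto
  then show ?thesis
    using prune_nonempty[OF fin inj] finite_subset[OF prune_subset fin]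
      inj_on_subset[OF inj prune_subset] by simp
next
  case False
  then have "store d j S e L = L" by (rule store_stale)
  then show ?thesis using assms by simp
qed

lemma covers_store:
  assumes "finite L" "inj_on etag L" "covers d (etag ` L) t"
  shows "covers d (etag ` store d j S e L) t"
proof (cases "e \<in> S \<and> eidx e = j \<and> (\<forall>e' \<in> L. etag e' \<noteq> etag e)")
  case True
  have inj: "inj_on etag (insert e L)" using True assms(2) by (auto simp: inj_on_def)
  have "covers d (etag ` insert e L) t"
    using covers_insert[OF finite_imageI[OF assms(1)] assms(3)] by simp
  moreover have "store d j S e L = prune d (insert e L)" using True by (intro store_fresh) auto
  ultimately show ?thesis using covers_prune[OF _ inj] assms(1) by simp
next
  case False
  then have "store d j S e L = L" by (rule store_stale)
  then show ?thesis using assms by simp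
qed

lemma covers_store_new:
  assumes "finite L" "inj_on etag L" "e \<in> S" "eidx e = j"
  shows "covers d (etag ` store d j S e L) (etag e)"
proof (cases "\<forall>e' \<in> L. etag e' \<noteq> etag e")
  case True
  have inj: "inj_on etag (insert e L)" using True assms(2) by (auto simp: inj_on_def)
  have "covers d (etag ` insert e L) (etag e)" by (simp add: covers_def)
  moreover have "store d j S e L = prune d (insert e L)" using True assms by (intro store_fresh)
  ultimately show ?thesis using covers_prune[OF _ inj] assms(1) by simp
next
  case False
  then obtain e' where "e' \<in> L" "etag e' = etag e" by blast
  then have "etag e \<in> etag ` L" by (metis imageI)
  moreover have "store d j S e L = L" using False by (intro store_stale) blast
  ultimately show ?thesis by (simp add: covers_def)
qed

lemma max_entry_greatest:
  assumes "finite L" "L \<noteq> {}"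
  shows "max_entry L \<in> L \<and> (\<forall>e' \<in> L. etag e' \<le> etag (max_entry L))"
proof -
  have "Max (etag ` L) \<in> etag ` L" using assms by simp
  then obtain e where e: "e \<in> L" "etag e = Max (etag ` L)" by (metis imageE)
  then have "\<exists>e. e \<in> L \<and> (\<forall>e' \<in> L. etag e' \<le> etag e)"
    using Max_ge[OF finite_imageI[OF assms(1)]] by (intro exI[of _ e]) auto
  from someI_ex[OF this] show ?thesis unfolding max_entry_def .
qed

lemma covers_le_max_entry:
  assumes "finite L" "L \<noteq> {}" "covers d (etag ` L) t"
  shows "t \<le> etag (max_entry L)"
proof -
  obtain e where "e \<in> L" "t \<le> etag e" using covers_imp_ex_ge[OF assms(3)] by blast
  have "etag e \<le> etag (max_entry L)" using max_entry_greatest[OF assms(1,2)] \<open>e \<in> L\<close> by blast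
  with \<open>t \<le> etag e\<close> show ?thesis by (rule order_trans)
qed

lemma tag_less_next: "(x :: 'w::linorder tag) \<le> y \<Longrightarrow> x < (Suc (fst y), c)"
  by (cases x; cases y) (auto simp: less_prod_def less_eq_prod_def)

lemma initial_tag_less: "0 < fst (x :: 'w::linorder tag) \<Longrightarrow> (0, w0) < x"
  by (cases x) (auto simp: less_prod_def)

lemma mds_codeD: "mds_code C k enc dec \<Longrightarrow> X \<subseteq> (\<lambda>j. (j, enc v j)) ` C \<Longrightarrow> k \<le> card X \<Longrightarrow> dec X = v"
  unfolding mds_code_def by blast

definition nmsg_round :: "('n,'w,'e) nmsg \<Rightarrow> nat" where
  "nmsg_round m = (case m of QTag r \<Rightarrow> r | QData r \<Rightarrow> r | Put r e \<Rightarrow> r)"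

definition verified_tag :: "('n,'w,'e) entry set \<Rightarrow> ('n,'w,'e) entry option \<Rightarrow> 'w tag option" where
  "verified_tag S eo = (case eo of Some e \<Rightarrow> (if e \<in> S then Some (etag e) else None) | None \<Rightarrow> None)"

definition verified_list :: "('n,'w,'e) entry set \<Rightarrow> 'n \<Rightarrow> ('n,'w,'e) entry set \<Rightarrow> ('n,'w,'e) entry set" where
  "verified_list S j L = {e \<in> L. e \<in> S \<and> eidx e = j}"

definition decoded_value :: "(('n \<times> 'e) set \<Rightarrow> 'v) \<Rightarrow> ('n \<rightharpoonup> ('n,'w,'e) entry set) \<Rightarrow> 'w tag \<Rightarrow> 'v" where
  "decoded_value dec M t = dec {(eidx e, eelem e) | e. e \<in> \<Union>(ran M) \<and> etag e = t}"

definition max_reply_tag :: "('n \<rightharpoonup> 'w::linorder tag option) \<Rightarrow> 'w tag" where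
  "max_reply_tag M = Max {t. \<exists>j. M j = Some (Some t)}"

definition invoke :: "'n set \<Rightarrow> 'w \<Rightarrow> (nat \<Rightarrow> ('n,'w,'v,'e) phase) \<Rightarrow> (nat \<Rightarrow> ('n,'w,'e) nmsg)
                       \<Rightarrow> ('n,'w,'v,'e) gstate \<Rightarrow> ('n,'w,'v,'e) gstate" where
  "invoke C c ph qm s =
     (let r = Suc (rnd s c) in
      s\<lparr>rnd := (rnd s)(c := r), phs := (phs s)(c := ph r), toNode := toNode s \<union> {(j, Cl c, qm r) | j. j \<in> C}\<rparr>)"

definition invocation :: "(nat \<Rightarrow> ('n,'w,'v,'e) phase) \<Rightarrow> (nat \<Rightarrow> ('n,'w,'e) nmsg) \<Rightarrow> bool" where
  "invocation ph qm \<longleftrightarrow> (\<exists>v. ph = (\<lambda>r. WTag r v Map.empty) \<and> qm = QTag) \<or> (ph = (\<lambda>r. RGet r Map.empty) \<and> qm = QData)"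

lemma invoke_simps:
  "lists (invoke C c ph qm s) = lists s"
  "signed (invoke C c ph qm s) = signed s"
  "toClient (invoke C c ph qm s) = toClient s"
  "rnd (invoke C c ph qm s) = (rnd s)(c := Suc (rnd s c))"
  "phs (invoke C c ph qm s) = (phs s)(c := ph (Suc (rnd s c)))"
  "toNode (invoke C c ph qm s) = toNode s \<union> {(j, Cl c, qm (Suc (rnd s c))) | j. j \<in> C}"
  by (simp_all add: invoke_def Let_def)

lemma invocation_query:
  "invocation ph qm \<Longrightarrow> nmsg_round (qm r) = r \<and> (\<forall>r' e. qm r \<noteq> Put r' e)"
  by (auto simp: invocation_def nmsg_round_def)

lemma start_put_simps:
  "lists (start_put C enc c t v ph s) = lists s"
  "toClient (start_put C enc c t v ph s) = toClient s"
  "phs (start_put C enc c t v ph s) = (phs s)(c := ph (Suc (rnd s c)))"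
  "rnd (start_put C enc c t v ph s) = (rnd s)(c := Suc (rnd s c))"
  "signed (start_put C enc c t v ph s) = signed s \<union> {(t, j, enc v j) | j. j \<in> C}"
  "toNode (start_put C enc c t v ph s) =
     toNode s \<union> {(j, Cl c, Put (Suc (rnd s c)) (t, j, enc v j)) | j. j \<in> C}"
  by (simp_all add: start_put_def Let_def)

definition node_reply :: "('n,'w::linorder,'e) nmsg \<Rightarrow> ('n,'w,'e) entry set \<Rightarrow> ('n,'w,'e) cmsg" where
  "node_reply m L = (case m of QTag r \<Rightarrow> RTag r (Some (max_entry L)) | QData r \<Rightarrow> RData r L | Put r e \<Rightarrow> Ack r)"

lemma node_recv_fields:
  assumes "s' = node_recv d j src m s"
  shows "phs s' = phs s \<and> rnd s' = rnd s \<and> signed s' = signed s \<and> toNode s' = toNode s \<and>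
    lists s' = (case m of Put r e \<Rightarrow> (lists s)(j := store d j (signed s) e (lists s j)) | _ \<Rightarrow> lists s) \<and>
    toClient s' = (case src of Cl c \<Rightarrow> insert (c, j, node_reply m (lists s j)) (toClient s) | Nd _ \<Rightarrow> toClient s)"
  using assms by (cases m; cases src) (simp_all add: node_recv_def node_reply_def Let_def)

lemma byz_step_cases:
  assumes "byz_step C Byz s s'"
  obtains (to_client) c j m where "j \<in> Byz" "s' = s\<lparr>toClient := insert (c, j, m) (toClient s)\<rparr>"
  | (to_node) i j m where "j \<in> Byz" "i \<in> C" "byz_node_ok (signed s) m"
      "s' = s\<lparr>toNode := insert (i, Nd j, m) (toNode s)\<rparr>"
  using assms unfolding byz_step_def by blast

lemma candidate_tags_subset:
  assumes "\<forall>i X. M i = Some X \<longrightarrow> X \<subseteq> S" "1 \<le> k"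
  shows "candidate_tags k M \<subseteq> etag ` S"
proof
  fix t assume "t \<in> candidate_tags k M"
  then have "0 < card {i \<in> dom M. \<exists>e \<in> the (M i). etag e = t}"
    using assms(2) by (simp add: candidate_tags_def)
  then have "{i \<in> dom M. \<exists>e \<in> the (M i). etag e = t} \<noteq> {}" by (metis card.empty less_irrefl)
  then obtain i e where "i \<in> dom M" "e \<in> the (M i)" "etag e = t" by blast
  then show "t \<in> etag ` S" using assms(1) by (metis domD imageI option.sel subsetD)
qed

lemma max_reply_tag_ge:
  assumes "finite (dom M)" "M j = Some (Some t)"
  shows "t \<le> max_reply_tag M"
proof -
  have "{t. \<exists>j. M j = Some (Some t)} \<subseteq> (\<lambda>j. the (the (M j))) ` dom M" by force
  then have "finite {t. \<exists>j. M j = Some (Some t)}" by (rule finite_subset) (use assms(1) in simp)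
  then show ?thesis using assms(2) unfolding max_reply_tag_def by (auto intro: Max_ge)
qed

lemma decoded_value_eq:
  assumes "mds_code C k enc dec" "k \<le> card {(eidx e, eelem e) | e. e \<in> \<Union>(ran M) \<and> etag e = t}"
    "\<And>e. e \<in> \<Union>(ran M) \<Longrightarrow> etag e = t \<Longrightarrow> eidx e \<in> C \<and> eelem e = enc w (eidx e)"
  shows "decoded_value dec M t = w"
  unfolding decoded_value_def
proof (rule mds_codeD[OF assms(1) _ assms(2)])
  show "{(eidx e, eelem e) | e. e \<in> \<Union>(ran M) \<and> etag e = t} \<subseteq> (\<lambda>j. (j, enc w j)) ` C"
  proof
    fix x assume "x \<in> {(eidx e, eelem e) | e. e \<in> \<Union>(ran M) \<and> etag e = t}"
    then obtain e where x: "x = (eidx e, eelem e)" "e \<in> \<Union>(ran M)" "etag e = t" by blast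
    then show "x \<in> (\<lambda>j. (j, enc w j)) ` C" using assms(3)[OF x(2,3)] by force
  qed
qed

locale protocol_run =
  fixes C Byz :: "'n set" and k \<delta> :: nat and enc :: "'v \<Rightarrow> 'n \<Rightarrow> 'e"
    and dec :: "('n \<times> 'e) set \<Rightarrow> 'v" and v0 :: 'v and w0 :: "'w::linorder"
    and run :: "nat \<Rightarrow> ('n,'w,'v,'e) gstate"
  assumes finite_C: "finite C" and Byz_subset: "Byz \<subseteq> C" and k_pos: "1 \<le> k"
    and k_le: "k \<le> card C" and mds: "mds_code C k enc dec"
    and execution: "execution C Byz k \<delta> enc dec v0 w0 run"
    and few_Byz: "3 * card Byz + k < card C"
begin

abbreviation q where "q \<equiv> quorum_size (card C) k"

lemma quorum_size_bounds: "2 * card C + k \<le> 3 * q" "q \<le> card C"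
proof -
  have "real q = real_of_int \<lceil>(2 * real (card C) + real k) / 3\<rceil>"
    unfolding quorum_size_def by (simp add: ceiling_le_zero)
  then have bounds: "(2 * real (card C) + real k) / 3 \<le> real q"
    "real q < (2 * real (card C) + real k) / 3 + 1"
    by (simp_all add: ceiling_correct) linarith
  then have "real (2 * card C + k) \<le> real (3 * q)" by simp
  then show "2 * card C + k \<le> 3 * q" by (simp only: of_nat_le_iff)
  have "(2 * real (card C) + real k) / 3 \<le> real (card C)" using k_le by simp
  then show "q \<le> card C" using bounds(2) by linarith
qed

lemma quorum_honest_overlap:
  assumes "A \<subseteq> C" "B \<subseteq> C" "card A = q" "card B = q"
  shows "k < card ((A \<inter> B) - Byz)"
proof -
  have fin: "finite A" "finite B" "finite Byz"
    using assms(1,2) Byz_subset finite_C by (meson finite_subset)+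
  have "card (A \<union> B) \<le> card C" using assms finite_C by (intro card_mono) auto
  moreover have "card (A \<union> B) + card (A \<inter> B) = card A + card B" using fin card_Un_Int by metis
  moreover have "card (A \<inter> B) \<le> card ((A \<inter> B) - Byz) + card Byz"
  proof -
    have "card (A \<inter> B) \<le> card (((A \<inter> B) - Byz) \<union> Byz)"
      using fin by (intro card_mono) auto
    also have "\<dots> \<le> card ((A \<inter> B) - Byz) + card Byz" by (rule card_Un_le)
    finally show ?thesis .
  qed
  ultimately show ?thesis using quorum_size_bounds few_Byz assms by linarith
qed

lemma C_nonempty: "C \<noteq> {}"
  using k_pos k_le by auto

lemma client_recv_cases:
  assumes "s' = client_recv C k enc dec c j m s0"
  obtains (unchanged) "s' = s0"
  | (tag_reply) r v M eo M' where "phs s0 c = WTag r v M" "m = RTag r eo"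
      "M' = M(j \<mapsto> verified_tag (signed s0) eo)" "card (dom M') \<noteq> q"
      "s' = s0\<lparr>phs := (phs s0)(c := WTag r v M')\<rparr>"
  | (tag_quorum) r v M eo M' where "phs s0 c = WTag r v M" "m = RTag r eo"
      "M' = M(j \<mapsto> verified_tag (signed s0) eo)" "card (dom M') = q"
      "s' = start_put C enc c (Suc (fst (max_reply_tag M')), c) v (\<lambda>r. WPut r {}) s0"
  | (write_ack) r A where "phs s0 c = WPut r A" "m = Ack r" "card (insert j A) \<noteq> q"
      "s' = s0\<lparr>phs := (phs s0)(c := WPut r (insert j A))\<rparr>"
  | (write_done) r A where "phs s0 c = WPut r A" "m = Ack r" "card (insert j A) = q"
      "s' = s0\<lparr>phs := (phs s0)(c := Idle)\<rparr>"
  | (data_reply) r M S M' where "phs s0 c = RGet r M" "m = RData r S"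
      "M' = M(j \<mapsto> verified_list (signed s0) j S)"
      "s' = s0\<lparr>phs := (phs s0)(c := RGet r M')\<rparr>"
  | (data_quorum) r M S M' where "phs s0 c = RGet r M" "m = RData r S"
      "M' = M(j \<mapsto> verified_list (signed s0) j S)" "card (dom M') = q" "candidate_tags k M' \<noteq> {}"
      "s' = start_put C enc c (Max (candidate_tags k M')) (decoded_value dec M' (Max (candidate_tags k M')))
              (\<lambda>r. RPut r (decoded_value dec M' (Max (candidate_tags k M'))) {}) s0"
  | (read_ack) r v A where "phs s0 c = RPut r v A" "m = Ack r" "card (insert j A) \<noteq> q"
      "s' = s0\<lparr>phs := (phs s0)(c := RPut r v (insert j A))\<rparr>"
  | (read_done) r v A where "phs s0 c = RPut r v A" "m = Ack r" "card (insert j A) = q"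
      "s' = s0\<lparr>phs := (phs s0)(c := Idle)\<rparr>"
proof (cases "phs s0 c")
  case Idle then show ?thesis using assms that(1) by (simp add: client_recv_def)
next
  case (WTag r v M)
  show ?thesis
  proof (cases m)
    case (RTag r' eo)
    define M' where "M' = M(j \<mapsto> verified_tag (signed s0) eo)"
    have "M(j \<mapsto> (case eo of Some e \<Rightarrow> (if e \<in> signed s0 then Some (etag e) else None)
                                | None \<Rightarrow> None)) = M'"
      by (simp add: M'_def verified_tag_def)
    then have rcv: "s' = (if r' = r \<and> j \<notin> dom M \<and> card (dom M) < q then
        (if card (dom M') = q then start_put C enc c (Suc (fst (max_reply_tag M')), c) v (\<lambda>r. WPut r {}) s0
         else s0\<lparr>phs := (phs s0)(c := WTag r v M')\<rparr>) else s0)"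
      using assms WTag RTag by (simp add: client_recv_def Let_def max_reply_tag_def)
    show ?thesis
      using rcv WTag RTag that(1) that(2,3)[of r v M eo M'] M'_def by (auto split: if_splits)
  qed (use assms WTag that(1) in \<open>auto simp: client_recv_def\<close>)
next
  case (WPut r A)
  show ?thesis
  proof (cases m)
    case (Ack r')
    then have "s' = (if r' = r \<and> j \<notin> A \<and> card A < q then
        (if card (insert j A) = q then s0\<lparr>phs := (phs s0)(c := Idle)\<rparr>
         else s0\<lparr>phs := (phs s0)(c := WPut r (insert j A))\<rparr>) else s0)"
      using assms WPut by (simp add: client_recv_def Let_def)
    then show ?thesis using WPut Ack that(1) that(4,5)[of r A] by (auto split: if_splits)
  qed (use assms WPut that(1) in \<open>auto simp: client_recv_def\<close>)
next
  case (RGet r M)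
  show ?thesis
  proof (cases m)
    case (RData r' S)
    define M' where "M' = M(j \<mapsto> verified_list (signed s0) j S)"
    have "M(j \<mapsto> {e \<in> S. e \<in> signed s0 \<and> eidx e = j}) = M'"
      by (simp add: M'_def verified_list_def)
    then have rcv: "s' = (if r' = r \<and> j \<notin> dom M \<and> card (dom M) < q then
        (if card (dom M') = q \<and> candidate_tags k M' \<noteq> {} then
           start_put C enc c (Max (candidate_tags k M')) (decoded_value dec M' (Max (candidate_tags k M')))
             (\<lambda>r. RPut r (decoded_value dec M' (Max (candidate_tags k M'))) {}) s0
         else s0\<lparr>phs := (phs s0)(c := RGet r M')\<rparr>) else s0)"
      using assms RGet RData by (simp add: client_recv_def Let_def decoded_value_def)
    show ?thesis
      using rcv RGet RData that(1) that(6,7)[of r M S M'] M'_def by (auto split: if_splits)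
  qed (use assms RGet that(1) in \<open>auto simp: client_recv_def\<close>)
next
  case (RPut r v A)
  show ?thesis
  proof (cases m)
    case (Ack r')
    then have "s' = (if r' = r \<and> j \<notin> A \<and> card A < q then
        (if card (insert j A) = q then s0\<lparr>phs := (phs s0)(c := Idle)\<rparr>
         else s0\<lparr>phs := (phs s0)(c := RPut r v (insert j A))\<rparr>) else s0)"
      using assms RPut by (simp add: client_recv_def Let_def)
    then show ?thesis using RPut Ack that(1) that(8,9)[of r v A] by (auto split: if_splits)
  qed (use assms RPut that(1) in \<open>auto simp: client_recv_def\<close>)
qed

lemma client_recv_frame:
  assumes "s' = client_recv C k enc dec c j m s0"
  shows "lists s' = lists s0 \<and> toClient s' = toClient s0 \<and>
    (\<forall>c'. c' \<noteq> c \<longrightarrow> phs s' c' = phs s0 c' \<and> rnd s' c' = rnd s0 c')"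
  using assms by (cases rule: client_recv_cases) (simp_all add: start_put_simps)

lemma next_step_cases:
  assumes "next_step C Byz k \<delta> enc dec s s'"
  obtains (stutter) "s' = s"
  | (invoke) c ph qm where "phs s c = Idle" "invocation ph qm" "s' = invoke C c ph qm s"
  | (node) j src m where "j \<in> C - Byz" "(j, src, m) \<in> toNode s"
      "s' = node_recv \<delta> j src m (s\<lparr>toNode := toNode s - {(j, src, m)}\<rparr>)"
  | (client) c j m where "(c, j, m) \<in> toClient s"
      "s' = client_recv C k enc dec c j m (s\<lparr>toClient := toClient s - {(c, j, m)}\<rparr>)"
  | (byz) "byz_step C Byz s s'"
  using assms unfolding next_step_def
proof (elim disjE)
  assume "inv_write C s s'"
  then obtain c v where "phs s c = Idle" "s' = invoke C c (\<lambda>r. WTag r v Map.empty) QTag s"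
    unfolding inv_write_def invoke_def by auto
  moreover have "invocation (\<lambda>r. WTag r v Map.empty) QTag" by (auto simp: invocation_def)
  ultimately show thesis using that(2) by blast
next
  assume "inv_read C s s'"
  then obtain c where "phs s c = Idle" "s' = invoke C c (\<lambda>r. RGet r Map.empty) QData s"
    unfolding inv_read_def invoke_def by auto
  moreover have "invocation (\<lambda>r. RGet r Map.empty) QData" by (simp add: invocation_def)
  ultimately show thesis using that(2) by blast
qed (use that in \<open>auto simp: node_step_def client_step_def\<close>)

lemma run_step: "next_step C Byz k \<delta> enc dec (run i) (run (Suc i))"
  using execution unfolding execution_def by blast

lemma run_0: "run 0 = init_state C enc v0 w0"
  using execution unfolding execution_def by blast

section \<open>Well-formed states\<close>

definition wf_phase :: "('n,'w,'v,'e) gstate \<Rightarrow> 'w \<Rightarrow> bool" where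
  "wf_phase s c \<longleftrightarrow> (case phs s c of Idle \<Rightarrow> True
     | WTag r v M \<Rightarrow> r = rnd s c \<and> dom M \<subseteq> C
     | WPut r A \<Rightarrow> r = rnd s c \<and> A \<subseteq> C
     | RGet r M \<Rightarrow> r = rnd s c \<and> dom M \<subseteq> C \<and>
         (\<forall>j X. M j = Some X \<longrightarrow> X \<subseteq> signed s \<and> (\<forall>e \<in> X. eidx e = j))
     | RPut r v A \<Rightarrow> r = rnd s c \<and> A \<subseteq> C)"

definition wf_to_node :: "('n,'w,'v,'e) gstate \<Rightarrow> bool" where
  "wf_to_node s \<longleftrightarrow> (\<forall>j src m. (j, src, m) \<in> toNode s \<longrightarrow>
     j \<in> C \<and> (\<forall>c. src = Cl c \<longrightarrow> nmsg_round m \<le> rnd s c) \<and>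
     (\<forall>r e. m = Put r e \<longrightarrow> e \<in> signed s \<and> (\<forall>c. src = Cl c \<longrightarrow> eidx e = j)))"

definition wf_to_client :: "('n,'w,'v,'e) gstate \<Rightarrow> bool" where
  "wf_to_client s \<longleftrightarrow> (\<forall>c j m. (c, j, m) \<in> toClient s \<longrightarrow> j \<in> C)"

definition wf_lists :: "('n,'w,'v,'e) gstate \<Rightarrow> bool" where
  "wf_lists s \<longleftrightarrow> (\<forall>j \<in> C - Byz. finite (lists s j) \<and> lists s j \<noteq> {} \<and> inj_on etag (lists s j) \<and>
     lists s j \<subseteq> signed s \<and> (\<forall>e \<in> lists s j. eidx e = j))"

definition wf_signed :: "('n,'w,'v,'e) gstate \<Rightarrow> bool" where
  "wf_signed s \<longleftrightarrow> finite (signed s) \<and>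
     (\<forall>e \<in> signed s. eidx e \<in> C \<and> (etag e = (0, w0) \<or> 0 < fst (etag e)))"

definition wf_state :: "('n,'w,'v,'e) gstate \<Rightarrow> bool" where
  "wf_state s \<longleftrightarrow> (\<forall>c. wf_phase s c) \<and> wf_to_node s \<and> wf_to_client s \<and> wf_lists s \<and> wf_signed s"

lemma wf_state_init: "wf_state (init_state C enc v0 w0)"
  unfolding wf_state_def wf_phase_def wf_to_node_def wf_to_client_def wf_lists_def wf_signed_def
    init_state_def using finite_C
  by (auto simp: etag_def eidx_def inj_on_def)

lemma wf_phase_cong:
  "wf_phase s c \<Longrightarrow> phs s' c = phs s c \<Longrightarrow> rnd s' c = rnd s c \<Longrightarrow> signed s \<subseteq> signed s' \<Longrightarrow>
    wf_phase s' c"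
  unfolding wf_phase_def by (cases "phs s c") (simp_all, meson subset_trans)

lemma wf_to_node_mono:
  assumes "wf_to_node s" "toNode s' \<subseteq> toNode s \<union> N" "\<And>c. rnd s c \<le> rnd s' c" "signed s \<subseteq> signed s'"
    "\<And>j src m. (j, src, m) \<in> N \<Longrightarrow> j \<in> C \<and> (\<forall>c. src = Cl c \<longrightarrow> nmsg_round m \<le> rnd s' c) \<and>
       (\<forall>r e. m = Put r e \<longrightarrow> e \<in> signed s' \<and> (\<forall>c. src = Cl c \<longrightarrow> eidx e = j))"
  shows "wf_to_node s'"
  unfolding wf_to_node_def
proof (intro allI impI)
  fix j src m assume m: "(j, src, m) \<in> toNode s'"
  show "j \<in> C \<and> (\<forall>c. src = Cl c \<longrightarrow> nmsg_round m \<le> rnd s' c) \<and>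
    (\<forall>r e. m = Put r e \<longrightarrow> e \<in> signed s' \<and> (\<forall>c. src = Cl c \<longrightarrow> eidx e = j))"
  proof (cases "(j, src, m) \<in> toNode s")
    case True
    then have "j \<in> C \<and> (\<forall>c. src = Cl c \<longrightarrow> nmsg_round m \<le> rnd s c) \<and>
        (\<forall>r e. m = Put r e \<longrightarrow> e \<in> signed s \<and> (\<forall>c. src = Cl c \<longrightarrow> eidx e = j))"
      using assms(1) unfolding wf_to_node_def by blast
    then show ?thesis using assms(3,4) by (auto intro: le_trans)
  next
    case False
    then show ?thesis using m assms(2,5) by blast
  qed
qed

lemma wf_to_client_mono:
  "wf_to_client s \<Longrightarrow> toClient s' \<subseteq> toClient s \<union> R \<Longrightarrow> (\<And>c j m. (c, j, m) \<in> R \<Longrightarrow> j \<in> C) \<Longrightarrow>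
    wf_to_client s'"
  unfolding wf_to_client_def by blast

lemma wf_lists_cong:
  "wf_lists s \<Longrightarrow> lists s' = lists s \<Longrightarrow> signed s \<subseteq> signed s' \<Longrightarrow> wf_lists s'"
  unfolding wf_lists_def by auto

lemma wf_state_messages:
  assumes "wf_state s" "phs s' = phs s" "rnd s' = rnd s" "signed s' = signed s" "lists s' = lists s"
    "toNode s' \<subseteq> toNode s \<union> N"
    "\<And>j src m. (j, src, m) \<in> N \<Longrightarrow> j \<in> C \<and> (\<exists>i. src = Nd i) \<and> (\<forall>r e. m = Put r e \<longrightarrow> e \<in> signed s)"
    "toClient s' \<subseteq> toClient s \<union> R" "\<And>c j m. (c, j, m) \<in> R \<Longrightarrow> j \<in> C"
  shows "wf_state s'"
proof -
  have "wf_phase s' c" for c using assms(1-4) wf_phase_cong[of s c s'] unfolding wf_state_def by simp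
  moreover have "wf_to_node s'"
  proof (rule wf_to_node_mono[where N = N])
  qed (use assms(1-6) in \<open>auto simp: wf_state_def dest!: assms(7)\<close>)
  moreover have "wf_to_client s'" using assms(1,8,9) wf_to_client_mono unfolding wf_state_def by blast
  moreover have "wf_lists s'" using assms(1,4,5) wf_lists_cong[of s s'] unfolding wf_state_def by simp
  moreover have "wf_signed s'" using assms(1,4) unfolding wf_state_def wf_signed_def by simp
  ultimately show ?thesis unfolding wf_state_def by blast
qed

lemma wf_state_phase_upd:
  assumes "wf_state s" "wf_phase (s\<lparr>phs := (phs s)(c := ph)\<rparr>) c"
  shows "wf_state (s\<lparr>phs := (phs s)(c := ph)\<rparr>)" (is "wf_state ?s")
proof -
  have "wf_phase ?s c'" for c'
  proof (cases "c' = c")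
    case False
    then show ?thesis using assms(1) wf_phase_cong[of s c' ?s] unfolding wf_state_def by simp
  qed (use assms(2) in simp)
  moreover have "wf_to_node ?s \<and> wf_to_client ?s \<and> wf_lists ?s \<and> wf_signed ?s"
    using assms(1) unfolding wf_state_def wf_to_node_def wf_to_client_def wf_lists_def wf_signed_def
    by simp
  ultimately show ?thesis unfolding wf_state_def by blast
qed

lemma wf_state_invoke:
  assumes "wf_state s" "invocation ph qm"
  shows "wf_state (invoke C c ph qm s)" (is "wf_state ?s")
proof -
  have "wf_phase ?s c'" for c'
  proof (cases "c' = c")
    case True
    then show ?thesis using assms(2) by (auto simp: invocation_def wf_phase_def invoke_simps)
  next
    case False
    then show ?thesis using assms(1) wf_phase_cong[of s c' ?s] unfolding wf_state_def
      by (simp add: invoke_simps)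
  qed
  moreover have "wf_to_node ?s"
  proof (rule wf_to_node_mono[where N = "{(j, Cl c, qm (Suc (rnd s c))) | j. j \<in> C}"])
    show "wf_to_node s" using assms(1) unfolding wf_state_def by blast
  qed (use invocation_query[OF assms(2)] in \<open>auto simp: invoke_simps\<close>)
  moreover have "wf_to_client ?s \<and> wf_lists ?s \<and> wf_signed ?s"
    using assms(1) unfolding wf_state_def wf_to_client_def wf_lists_def wf_signed_def
    by (simp add: invoke_simps)
  ultimately show ?thesis unfolding wf_state_def by blast
qed

lemma wf_state_start_put:
  assumes "wf_state s" "t = (0, w0) \<or> 0 < fst t"
    "ph (Suc (rnd s c)) = WPut (Suc (rnd s c)) {} \<or> (\<exists>v'. ph (Suc (rnd s c)) = RPut (Suc (rnd s c)) v' {})"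
  shows "wf_state (start_put C enc c t v ph s)" (is "wf_state ?s")
proof -
  have "wf_phase ?s c'" for c'
  proof (cases "c' = c")
    case True
    then show ?thesis using assms(3) unfolding wf_phase_def by (auto simp: start_put_simps)
  next
    case False
    then show ?thesis using assms(1) wf_phase_cong[of s c' ?s] unfolding wf_state_def
      by (auto simp: start_put_simps)
  qed
  moreover have "wf_to_node ?s"
  proof (rule wf_to_node_mono[where N = "{(j, Cl c, Put (Suc (rnd s c)) (t, j, enc v j)) | j. j \<in> C}"])
    show "wf_to_node s" using assms(1) unfolding wf_state_def by blast
  qed (auto simp: start_put_simps nmsg_round_def eidx_def)
  moreover have "wf_to_client ?s \<and> wf_lists ?s"
    using assms(1) wf_lists_cong[of s ?s] unfolding wf_state_def wf_to_client_def
    by (auto simp: start_put_simps)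
  moreover have "wf_signed ?s"
    using assms(1,2) finite_C unfolding wf_state_def wf_signed_def
    by (auto simp: start_put_simps etag_def eidx_def)
  ultimately show ?thesis unfolding wf_state_def by blast
qed

lemma wf_lists_node_recv:
  assumes "wf_lists s" "s' = node_recv \<delta> j src m s"
  shows "wf_lists s'"
proof (cases m)
  case (Put r e)
  have lists: "lists s' = (lists s)(j := store \<delta> j (signed s) e (lists s j))"
    using node_recv_fields[OF assms(2)] Put by simp
  have "signed s' = signed s" using node_recv_fields[OF assms(2)] by simp
  moreover have "store \<delta> j (signed s) e (lists s j) \<subseteq> lists s j \<union> ({e} \<inter> {e \<in> signed s. eidx e = j})"
    by (rule store_subset)
  ultimately show ?thesis
    using assms(1) store_wf[of "lists s j" \<delta> j "signed s" e] unfolding wf_lists_def lists by auto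
qed (use assms node_recv_fields[OF assms(2)] wf_lists_cong[of s s'] in simp_all)

lemma wf_state_node_recv:
  assumes "wf_state s" "j \<in> C" "s' = node_recv \<delta> j src m s"
  shows "wf_state s'"
proof -
  note fields = node_recv_fields[OF assms(3)]
  have "wf_phase s' c" for c using assms(1) fields wf_phase_cong[of s c s'] unfolding wf_state_def by simp
  moreover have "wf_to_node s' \<and> wf_signed s'"
    using assms(1) fields unfolding wf_state_def wf_to_node_def wf_signed_def by simp
  moreover have "wf_to_client s'"
    using assms(1,2) fields wf_to_client_mono[of s s' "{(c, j, x) | c x. True}"] unfolding wf_state_def
    by (auto split: sender.splits)
  moreover have "wf_lists s'" using assms(1,3) wf_lists_node_recv unfolding wf_state_def by blast
  ultimately show ?thesis unfolding wf_state_def by blast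
qed

lemma wf_state_client_recv:
  assumes "wf_state s" "j \<in> C" "s' = client_recv C k enc dec c j m s"
  shows "wf_state s'"
proof -
  have ph: "wf_phase s c" and sg: "wf_signed s" using assms(1) unfolding wf_state_def by blast+
  from assms(3) show ?thesis
  proof (cases rule: client_recv_cases)
    case (tag_quorum r v M eo M')
    then show ?thesis by (auto intro: wf_state_start_put[OF assms(1)])
  next
    case (data_quorum r M S M')
    have "\<forall>i X. M' i = Some X \<longrightarrow> X \<subseteq> signed s"
      using ph data_quorum(1,3) by (auto simp: wf_phase_def verified_list_def)
    then have sub: "candidate_tags k M' \<subseteq> etag ` signed s" using k_pos by (rule candidate_tags_subset)
    then have "finite (candidate_tags k M')" using sg unfolding wf_signed_def by (meson finite_imageI finite_subset)
    then have "Max (candidate_tags k M') \<in> etag ` signed s" using Max_in data_quorum(5) sub by blast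
    then obtain e where "e \<in> signed s" "Max (candidate_tags k M') = etag e" by blast
    then have "Max (candidate_tags k M') = (0, w0) \<or> 0 < fst (Max (candidate_tags k M'))"
      using sg unfolding wf_signed_def by metis
    then show ?thesis using data_quorum(6) by (auto intro: wf_state_start_put[OF assms(1)])
  qed (use assms(1,2) ph in \<open>auto intro!: wf_state_phase_upd simp: wf_phase_def verified_list_def\<close>)
qed

lemma wf_state_step:
  assumes "wf_state s" "next_step C Byz k \<delta> enc dec s s'"
  shows "wf_state s'"
  using assms(2)
proof (cases rule: next_step_cases)
  case (invoke c ph qm)
  then show ?thesis using assms(1) wf_state_invoke by simp
next
  case (node j src m)
  have "wf_state (s\<lparr>toNode := toNode s - {(j, src, m)}\<rparr>)"
    using assms(1) by (rule wf_state_messages[where N = "{}" and R = "{}"]) auto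
  then show ?thesis using node wf_state_node_recv by blast
next
  case (client c j m)
  have "wf_state (s\<lparr>toClient := toClient s - {(c, j, m)}\<rparr>)"
    using assms(1) by (rule wf_state_messages[where N = "{}" and R = "{}"]) auto
  moreover have "j \<in> C" using assms(1) client(1) unfolding wf_state_def wf_to_client_def by blast
  ultimately show ?thesis using client wf_state_client_recv by blast
next
  case byz
  then show ?thesis
  proof (cases rule: byz_step_cases)
    case (to_client c j m)
    show ?thesis using assms(1)
      by (rule wf_state_messages[where N = "{}" and R = "{(c, j, m)}"]) (use to_client Byz_subset in auto)
  next
    case (to_node i j m)
    show ?thesis using assms(1)
      by (rule wf_state_messages[where N = "{(i, Nd j, m)}" and R = "{}"])
         (use to_node in \<open>auto simp: byz_node_ok_def split: nmsg.splits\<close>)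
  qed
qed (use assms in simp)

lemma wf_state_run: "wf_state (run i)"
  by (induction i) (use wf_state_init wf_state_step run_step run_0 in auto)

lemma wf_phase_run: "wf_phase (run i) c"
  and wf_to_node_run: "wf_to_node (run i)"
  and wf_to_client_run: "wf_to_client (run i)"
  and wf_lists_run: "wf_lists (run i)"
  and wf_signed_run: "wf_signed (run i)"
  using wf_state_run[of i] unfolding wf_state_def by blast+

section \<open>Rounds and tags of put-data messages\<close>

definition orderly_step :: "('n,'w,'v,'e) gstate \<Rightarrow> ('n,'w,'v,'e) gstate \<Rightarrow> bool" where
  "orderly_step s s' \<longleftrightarrow> signed s \<subseteq> signed s' \<and>
    (\<forall>c. rnd s' c = rnd s c \<or> rnd s' c = Suc (rnd s c)) \<and>
    (\<exists>tag. \<forall>i src m. (i, src, m) \<in> toNode s' \<longrightarrow> (i, src, m) \<notin> toNode s \<longrightarrow>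
        (\<exists>j. src = Nd j) \<or>
        (\<exists>c. src = Cl c \<and> nmsg_round m = rnd s' c \<and> rnd s' c = Suc (rnd s c) \<and>
             (\<forall>r e. m = Put r e \<longrightarrow> etag e = tag c)))"

lemma orderly_step_frame:
  "signed s' = signed s \<Longrightarrow> rnd s' = rnd s \<Longrightarrow> toNode s' \<subseteq> toNode s \<union> {(i, Nd j, m) | i j m. True} \<Longrightarrow>
    orderly_step s s'"
  unfolding orderly_step_def by (intro conjI exI[of _ "\<lambda>_. undefined"]) auto

lemma orderly_step_start_put:
  "signed s0 = signed s \<Longrightarrow> rnd s0 = rnd s \<Longrightarrow> toNode s0 = toNode s \<Longrightarrow>
    orderly_step s (start_put C enc c t v ph s0)"
  unfolding orderly_step_def
  by (intro conjI exI[of _ "\<lambda>_. t"]) (auto simp: start_put_simps nmsg_round_def etag_def)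

lemma orderly_step_client_recv:
  assumes "s' = client_recv C k enc dec c j m (s\<lparr>toClient := toClient s - {(c, j, m)}\<rparr>)"
  shows "orderly_step s s'"
  using assms
  by (cases rule: client_recv_cases) (simp_all add: orderly_step_frame orderly_step_start_put)

lemma orderly_step_run: "orderly_step (run i) (run (Suc i))"
  using run_step[of i]
proof (cases rule: next_step_cases)
  case (invoke c ph qm)
  have "nmsg_round (qm (Suc (rnd (run i) c))) = Suc (rnd (run i) c)"
    "\<forall>r e. qm (Suc (rnd (run i) c)) \<noteq> Put r e"
    using invocation_query[OF invoke(2)] by auto
  then show ?thesis unfolding orderly_step_def invoke(3)
    by (intro conjI exI[of _ "\<lambda>_. undefined"]) (auto simp: invoke_simps)
next
  case (node j src m)
  then show ?thesis using node_recv_fields[OF node(3)] by (intro orderly_step_frame) auto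
next
  case byz
  then show ?thesis by (cases rule: byz_step_cases) (auto intro: orderly_step_frame)
qed (simp_all add: orderly_step_frame orderly_step_client_recv)

lemma signed_mono: "i \<le> i' \<Longrightarrow> signed (run i) \<subseteq> signed (run i')"
proof (induction i' rule: dec_induct)
  case (step n) then show ?case using orderly_step_run[of n] unfolding orderly_step_def by blast
qed simp

lemma rnd_Suc: "rnd (run (Suc i)) c = rnd (run i) c \<or> rnd (run (Suc i)) c = Suc (rnd (run i) c)"
  using orderly_step_run[of i] unfolding orderly_step_def by blast

lemma rnd_mono: "i \<le> i' \<Longrightarrow> rnd (run i) c \<le> rnd (run i') c"
proof (induction i' rule: dec_induct)
  case (step n) then show ?case using rnd_Suc[of n c] by linarith
qed simp

lemma nmsg_round_le: "(j, Cl c, m) \<in> toNode (run i) \<Longrightarrow> nmsg_round m \<le> rnd (run i) c"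
  using wf_to_node_run[of i] unfolding wf_to_node_def by blast

lemma new_client_msg:
  assumes "(j, Cl c, m) \<in> toNode (run (Suc i))" "(j, Cl c, m) \<notin> toNode (run i)"
  shows "nmsg_round m = Suc (rnd (run i) c)"
  using assms orderly_step_run[of i] unfolding orderly_step_def by fastforce

lemma new_puts_same_tag:
  assumes "(j, Cl c, Put r e) \<in> toNode (run (Suc i))" "(j, Cl c, Put r e) \<notin> toNode (run i)"
    "(j', Cl c, Put r' e') \<in> toNode (run (Suc i))" "(j', Cl c, Put r' e') \<notin> toNode (run i)"
  shows "etag e = etag e'"
proof -
  obtain tag where tag: "\<forall>i' src m. (i', src, m) \<in> toNode (run (Suc i)) \<longrightarrow> (i', src, m) \<notin> toNode (run i) \<longrightarrow>
      (\<exists>j. src = Nd j) \<or> (\<exists>c. src = Cl c \<and> nmsg_round m = rnd (run (Suc i)) c \<and>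
         rnd (run (Suc i)) c = Suc (rnd (run i) c) \<and> (\<forall>r e. m = Put r e \<longrightarrow> etag e = tag c))"
    using orderly_step_run[of i] unfolding orderly_step_def by blast
  have "etag e = tag c" using tag assms(1,2) by fastforce
  moreover have "etag e' = tag c" using tag assms(3,4) by fastforce
  ultimately show ?thesis by simp
qed

text \<open>A put-data message created in a later step belongs to a strictly larger round.\<close>
lemma put_round_tag_unique:
  "i1 \<le> i \<Longrightarrow> (j, Cl c, Put r e) \<in> toNode (run i1) \<Longrightarrow> (j', Cl c, Put r e') \<in> toNode (run i) \<Longrightarrow>
    etag e = etag e'"
proof (induction i arbitrary: i1 j e j' e')
  case 0 then show ?case by (simp add: run_0 init_state_def)
next
  case (Suc i)
  have "r \<le> rnd (run i1) c" using nmsg_round_le[OF Suc.prems(2)] by (simp add: nmsg_round_def)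
  then have old_round: "r \<le> rnd (run i') c" if "i1 \<le> i'" for i'
    using rnd_mono[OF that, of c] by linarith
  show ?case
  proof (cases "i1 \<le> i")
    case True
    show ?thesis
    proof (cases "(j', Cl c, Put r e') \<in> toNode (run i)")
      case False
      then show ?thesis using new_client_msg[OF Suc.prems(3)] old_round[OF True] by (simp add: nmsg_round_def)
    qed (use Suc.IH[OF True Suc.prems(2)] in blast)
  next
    case False
    then have i1: "i1 = Suc i" using Suc.prems(1) by simp
    consider "(j, Cl c, Put r e) \<in> toNode (run i)" "(j', Cl c, Put r e') \<in> toNode (run i)"
      | "(j', Cl c, Put r e') \<notin> toNode (run i)" "(j, Cl c, Put r e) \<in> toNode (run i)"
      | "(j, Cl c, Put r e) \<notin> toNode (run i)" "(j', Cl c, Put r e') \<in> toNode (run i)"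
      | "(j, Cl c, Put r e) \<notin> toNode (run i)" "(j', Cl c, Put r e') \<notin> toNode (run i)"
      by blast
    then show ?thesis
    proof cases
      case 1 then show ?thesis using Suc.IH[OF order.refl] by blast
    next
      case 2 then show ?thesis
        using new_client_msg[OF Suc.prems(3)] nmsg_round_le[of j c "Put r e" i] by (simp add: nmsg_round_def)
    next
      case 3 then show ?thesis
        using new_client_msg[OF Suc.prems(2)[unfolded i1]] nmsg_round_le[of j' c "Put r e'" i]
        by (simp add: nmsg_round_def)
    next
      case 4 then show ?thesis using new_puts_same_tag Suc.prems(2,3) i1 by blast
    qed
  qed
qed

definition round_tag :: "'w \<Rightarrow> nat \<Rightarrow> 'w tag" where
  "round_tag c r = (SOME t. \<exists>i j e. (j, Cl c, Put r e) \<in> toNode (run i) \<and> etag e = t)"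

lemma round_tag_eq:
  assumes "(j, Cl c, Put r e) \<in> toNode (run i)"
  shows "etag e = round_tag c r"
proof -
  have "\<exists>t i j e. (j, Cl c, Put r e) \<in> toNode (run i) \<and> etag e = t" using assms by blast
  from someI_ex[OF this] obtain i' j' e' where
    put: "(j', Cl c, Put r e') \<in> toNode (run i')" "etag e' = round_tag c r"
    unfolding round_tag_def by blast
  show ?thesis
    using put_round_tag_unique[of i i' j c r e j' e'] put_round_tag_unique[of i' i j' c r e' j e]
      assms put by (cases "i \<le> i'") auto
qed

lemma round_tag_start_put:
  assumes "run (Suc i) = start_put C enc c t v ph s0" "rnd s0 c = rnd (run i) c"
  shows "round_tag c (Suc (rnd (run i) c)) = t"
proof -
  obtain j where "j \<in> C" using C_nonempty by blast
  then have "(j, Cl c, Put (Suc (rnd (run i) c)) (t, j, enc v j)) \<in> toNode (run (Suc i))"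
    using assms by (simp add: start_put_simps)
  from round_tag_eq[OF this] show ?thesis by (simp add: etag_def)
qed

lemma lists_Suc:
  "lists (run (Suc i)) j = lists (run i) j \<or>
   (\<exists>e. lists (run (Suc i)) j = store \<delta> j (signed (run i)) e (lists (run i) j))"
  using run_step[of i]
proof (cases rule: next_step_cases)
  case (node j' src m)
  note fields = node_recv_fields[OF node(3)]
  show ?thesis
  proof (cases m)
    case (Put r e)
    show ?thesis
    proof (cases "j = j'")
      case True
      then show ?thesis using fields Put by (intro disjI2 exI[of _ e]) simp
    qed (use fields Put in simp)
  qed (use fields in simp_all)
next
  case (client c j' m)
  then show ?thesis using client_recv_frame[OF client(2)] by simp
next
  case byz
  then show ?thesis by (cases rule: byz_step_cases) auto
qed (simp_all add: invoke_simps)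

lemma covers_stable:
  assumes "j \<in> C - Byz" "covers \<delta> (etag ` lists (run i) j) t" "i \<le> i'"
  shows "covers \<delta> (etag ` lists (run i') j) t"
  using assms(3,2)
proof (induction i' rule: dec_induct)
  case (step n)
  have "finite (lists (run n) j)" "inj_on etag (lists (run n) j)"
    using wf_lists_run[of n] assms(1) unfolding wf_lists_def by blast+
  then show ?case using lists_Suc[of n j] covers_store step.IH[OF step.prems] by metis
qed simp

section \<open>Soundness of the replies seen by clients\<close>

definition reply_sound :: "nat \<Rightarrow> 'w \<Rightarrow> 'n \<Rightarrow> ('n,'w,'e) cmsg \<Rightarrow> bool" where
  "reply_sound i c j m = (case m of
      RTag r eo \<Rightarrow> (\<exists>i' \<le> i. r \<le> rnd (run i') c \<and> eo = Some (max_entry (lists (run i') j)))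
    | RData r L \<Rightarrow> (\<exists>i' \<le> i. r \<le> rnd (run i') c \<and> L = lists (run i') j)
    | Ack r \<Rightarrow> covers \<delta> (etag ` lists (run i) j) (round_tag c r))"

definition tag_replies_sound :: "nat \<Rightarrow> 'w \<Rightarrow> nat \<Rightarrow> ('n \<rightharpoonup> 'w tag option) \<Rightarrow> bool" where
  "tag_replies_sound i c r M \<longleftrightarrow> (\<forall>j \<in> dom M - Byz. \<exists>i' \<le> i.
     r \<le> rnd (run i') c \<and> M j = Some (Some (etag (max_entry (lists (run i') j)))))"

definition data_replies_sound :: "nat \<Rightarrow> 'w \<Rightarrow> nat \<Rightarrow> ('n \<rightharpoonup> ('n,'w,'e) entry set) \<Rightarrow> bool" where
  "data_replies_sound i c r M \<longleftrightarrow> (\<forall>j \<in> dom M - Byz. \<exists>i' \<le> i.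
     r \<le> rnd (run i') c \<and> M j = Some (lists (run i') j))"

definition acks_sound :: "nat \<Rightarrow> 'w \<Rightarrow> nat \<Rightarrow> 'n set \<Rightarrow> bool" where
  "acks_sound i c r A \<longleftrightarrow> (\<forall>j \<in> A - Byz. covers \<delta> (etag ` lists (run i) j) (round_tag c r))"

definition phase_sound :: "nat \<Rightarrow> 'w \<Rightarrow> bool" where
  "phase_sound i c = (case phs (run i) c of
      Idle \<Rightarrow> True
    | WTag r v M \<Rightarrow> tag_replies_sound i c r M
    | WPut r A \<Rightarrow> acks_sound i c r A
    | RGet r M \<Rightarrow> data_replies_sound i c r M
    | RPut r v A \<Rightarrow> acks_sound i c r A)"

definition views_sound :: "nat \<Rightarrow> bool" where
  "views_sound i \<longleftrightarrow> (\<forall>c j m. (c, j, m) \<in> toClient (run i) \<longrightarrow> j \<notin> Byz \<longrightarrow> reply_sound i c j m) \<and>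
     (\<forall>c. phase_sound i c)"

lemma reply_sound_Suc: "j \<in> C - Byz \<Longrightarrow> reply_sound i c j m \<Longrightarrow> reply_sound (Suc i) c j m"
  using covers_stable[of j i _ "Suc i"] unfolding reply_sound_def
  by (cases m) (auto intro: le_SucI)

lemma acks_sound_mono:
  "A \<subseteq> C \<Longrightarrow> i \<le> i' \<Longrightarrow> acks_sound i c r A \<Longrightarrow> acks_sound i' c r A"
  unfolding acks_sound_def using covers_stable by blast

lemma phase_sound_Suc:
  assumes "phs (run (Suc i)) c = phs (run i) c" "phase_sound i c"
  shows "phase_sound (Suc i) c"
proof (cases "phs (run i) c")
  case (WPut r A)
  then have "A \<subseteq> C" using wf_phase_run[of i c] unfolding wf_phase_def by simp
  then show ?thesis using assms WPut acks_sound_mono[of A i "Suc i"] unfolding phase_sound_def by simp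
next
  case (RPut r v A)
  then have "A \<subseteq> C" using wf_phase_run[of i c] unfolding wf_phase_def by simp
  then show ?thesis using assms RPut acks_sound_mono[of A i "Suc i"] unfolding phase_sound_def by simp
qed (use assms in \<open>auto simp: phase_sound_def tag_replies_sound_def data_replies_sound_def
                              intro: le_SucI\<close>)

lemma verified_tag_max_entry:
  assumes "j \<in> C - Byz" "i' \<le> i"
  shows "verified_tag (signed (run i)) (Some (max_entry (lists (run i') j))) =
    Some (etag (max_entry (lists (run i') j)))"
proof -
  have "finite (lists (run i') j)" "lists (run i') j \<noteq> {}" "lists (run i') j \<subseteq> signed (run i')"
    using wf_lists_run[of i'] assms(1) unfolding wf_lists_def by blast+
  then have "max_entry (lists (run i') j) \<in> signed (run i)"
    using max_entry_greatest signed_mono[OF assms(2)] by blast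
  then show ?thesis unfolding verified_tag_def by simp
qed

lemma verified_list_honest:
  assumes "j \<in> C - Byz" "i' \<le> i"
  shows "verified_list (signed (run i)) j (lists (run i') j) = lists (run i') j"
proof -
  have "lists (run i') j \<subseteq> signed (run i')" "\<forall>e \<in> lists (run i') j. eidx e = j"
    using wf_lists_run[of i'] assms(1) unfolding wf_lists_def by blast+
  then show ?thesis using signed_mono[OF assms(2)] unfolding verified_list_def by blast
qed

lemma tag_replies_sound_upd:
  assumes "tag_replies_sound i c r M" "j \<in> C" "j \<notin> Byz \<Longrightarrow> reply_sound i c j (RTag r eo)"
  shows "tag_replies_sound i c r (M(j \<mapsto> verified_tag (signed (run i)) eo))"
  unfolding tag_replies_sound_def
proof
  fix j' assume j': "j' \<in> dom (M(j \<mapsto> verified_tag (signed (run i)) eo)) - Byz"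
  show "\<exists>i' \<le> i. r \<le> rnd (run i') c \<and>
    (M(j \<mapsto> verified_tag (signed (run i)) eo)) j' = Some (Some (etag (max_entry (lists (run i') j'))))"
  proof (cases "j' = j")
    case True
    then obtain i' where "i' \<le> i" "r \<le> rnd (run i') c" "eo = Some (max_entry (lists (run i') j))"
      using assms(3) j' unfolding reply_sound_def by auto
    then show ?thesis using True verified_tag_max_entry[of j i' i] assms(2) j' by (intro exI[of _ i']) auto
  qed (use assms(1) j' in \<open>auto simp: tag_replies_sound_def\<close>)
qed

lemma data_replies_sound_upd:
  assumes "data_replies_sound i c r M" "j \<in> C" "j \<notin> Byz \<Longrightarrow> reply_sound i c j (RData r L)"
  shows "data_replies_sound i c r (M(j \<mapsto> verified_list (signed (run i)) j L))"
  unfolding data_replies_sound_def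
proof
  fix j' assume j': "j' \<in> dom (M(j \<mapsto> verified_list (signed (run i)) j L)) - Byz"
  show "\<exists>i' \<le> i. r \<le> rnd (run i') c \<and> (M(j \<mapsto> verified_list (signed (run i)) j L)) j' = Some (lists (run i') j')"
  proof (cases "j' = j")
    case True
    then obtain i' where "i' \<le> i" "r \<le> rnd (run i') c" "L = lists (run i') j"
      using assms(3) j' unfolding reply_sound_def by auto
    then show ?thesis using True verified_list_honest[of j i' i] assms(2) j' by (intro exI[of _ i']) auto
  qed (use assms(1) j' in \<open>auto simp: data_replies_sound_def\<close>)
qed

lemma acks_sound_insert:
  "acks_sound i c r A \<Longrightarrow> (j \<notin> Byz \<Longrightarrow> reply_sound i c j (Ack r)) \<Longrightarrow> acks_sound i c r (insert j A)"
  unfolding acks_sound_def reply_sound_def by auto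

lemma views_sound_Suc_intro:
  assumes "views_sound i"
    and new_replies: "\<And>c j m. (c, j, m) \<in> toClient (run (Suc i)) \<Longrightarrow> (c, j, m) \<notin> toClient (run i) \<Longrightarrow>
      j \<notin> Byz \<Longrightarrow> reply_sound (Suc i) c j m"
    and new_phases: "\<And>c. phs (run (Suc i)) c \<noteq> phs (run i) c \<Longrightarrow> phase_sound (Suc i) c"
  shows "views_sound (Suc i)"
proof -
  have "reply_sound (Suc i) c j m" if "(c, j, m) \<in> toClient (run (Suc i))" "j \<notin> Byz" for c j m
  proof (cases "(c, j, m) \<in> toClient (run i)")
    case True
    then have "j \<in> C" using wf_to_client_run[of i] unfolding wf_to_client_def by blast
    then show ?thesis using assms(1) True that(2) reply_sound_Suc unfolding views_sound_def by blast
  qed (use that new_replies in blast)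
  moreover have "phase_sound (Suc i) c" for c
    using assms(1) new_phases phase_sound_Suc unfolding views_sound_def by blast
  ultimately show ?thesis unfolding views_sound_def by blast
qed

lemma node_reply_sound:
  assumes "j \<in> C - Byz" "(j, Cl c, m) \<in> toNode (run i)"
    "run (Suc i) = node_recv \<delta> j (Cl c) m ((run i)\<lparr>toNode := toNode (run i) - {(j, Cl c, m)}\<rparr>)"
  shows "reply_sound (Suc i) c j (node_reply m (lists (run i) j))"
proof (cases m)
  case (Put r e)
  have e: "e \<in> signed (run i)" "eidx e = j"
    using wf_to_node_run[of i] assms(2) unfolding wf_to_node_def Put by blast+
  have "finite (lists (run i) j)" "inj_on etag (lists (run i) j)"
    using wf_lists_run[of i] assms(1) unfolding wf_lists_def by blast+
  then have "covers \<delta> (etag ` store \<delta> j (signed (run i)) e (lists (run i) j)) (round_tag c r)"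
    using covers_store_new[OF _ _ e] round_tag_eq assms(2) unfolding Put by metis
  then show ?thesis using node_recv_fields[OF assms(3)] Put by (simp add: reply_sound_def node_reply_def)
qed (use nmsg_round_le[OF assms(2)] in
      \<open>auto simp: reply_sound_def node_reply_def nmsg_round_def intro!: exI[of _ i]\<close>)

lemma tag_replies_sound_mono: "i \<le> i' \<Longrightarrow> tag_replies_sound i c r M \<Longrightarrow> tag_replies_sound i' c r M"
  unfolding tag_replies_sound_def by (meson order.trans)

lemma data_replies_sound_mono: "i \<le> i' \<Longrightarrow> data_replies_sound i c r M \<Longrightarrow> data_replies_sound i' c r M"
  unfolding data_replies_sound_def by (meson order.trans)

lemma phase_sound_client_recv:
  assumes "views_sound i" "(c, j, m) \<in> toClient (run i)"
    "run (Suc i) = client_recv C k enc dec c j m ((run i)\<lparr>toClient := toClient (run i) - {(c, j, m)}\<rparr>)"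
  shows "phase_sound (Suc i) c"
proof -
  have j: "j \<in> C" using wf_to_client_run[of i] assms(2) unfolding wf_to_client_def by blast
  have reply: "reply_sound i c j m" if "j \<notin> Byz" using assms(1,2) that unfolding views_sound_def by blast
  have phase: "phase_sound i c" using assms(1) unfolding views_sound_def by blast
  have lists: "lists (run (Suc i)) = lists (run i)" using client_recv_frame[OF assms(3)] by simp
  from assms(3) show ?thesis
  proof (cases rule: client_recv_cases)
    case unchanged
    then show ?thesis using phase_sound_Suc phase by simp
  next
    case (tag_reply r v M eo M')
    then have "tag_replies_sound i c r M'"
      using tag_replies_sound_upd[of i c r M j eo] phase reply j by (simp add: phase_sound_def)
    then show ?thesis using tag_reply(5) tag_replies_sound_mono[of i "Suc i"] by (simp add: phase_sound_def)
  next
    case (data_reply r M S M')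
    then have "data_replies_sound i c r M'"
      using data_replies_sound_upd[of i c r M j S] phase reply j by (simp add: phase_sound_def)
    then show ?thesis using data_reply(4) data_replies_sound_mono[of i "Suc i"] by (simp add: phase_sound_def)
  next
    case (write_ack r A)
    then have "acks_sound i c r (insert j A)"
      using acks_sound_insert phase reply by (simp add: phase_sound_def)
    then show ?thesis using write_ack(4) lists by (simp add: phase_sound_def acks_sound_def)
  next
    case (read_ack r v A)
    then have "acks_sound i c r (insert j A)"
      using acks_sound_insert phase reply by (simp add: phase_sound_def)
    then show ?thesis using read_ack(4) lists by (simp add: phase_sound_def acks_sound_def)
  qed (simp_all add: phase_sound_def acks_sound_def start_put_simps)
qed

lemma views_sound_Suc:
  assumes "views_sound i"
  shows "views_sound (Suc i)"
  using run_step[of i]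
proof (cases rule: next_step_cases)
  case (invoke c ph qm)
  then show ?thesis using assms
    by (intro views_sound_Suc_intro)
       (auto simp: invoke_simps invocation_def phase_sound_def tag_replies_sound_def
         data_replies_sound_def split: if_splits)
next
  case (node j src m)
  show ?thesis using assms
  proof (rule views_sound_Suc_intro)
    fix c j' m' assume "(c, j', m') \<in> toClient (run (Suc i))" "(c, j', m') \<notin> toClient (run i)"
    then show "reply_sound (Suc i) c j' m'"
      using node node_reply_sound node_recv_fields[OF node(3)] by (cases src) auto
  qed (use node_recv_fields[OF node(3)] in simp)
next
  case (client c j m)
  note frame = client_recv_frame[OF client(2)]
  show ?thesis using assms
  proof (rule views_sound_Suc_intro)
    fix c' assume "phs (run (Suc i)) c' \<noteq> phs (run i) c'"
    then show "phase_sound (Suc i) c'" using frame phase_sound_client_recv[OF assms client] by force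
  qed (use frame in simp)
next
  case byz
  then show ?thesis
    by (cases rule: byz_step_cases) (auto intro!: views_sound_Suc_intro[OF assms])
next
  case stutter
  then show ?thesis by (intro views_sound_Suc_intro[OF assms]) auto
qed

lemma views_sound_run: "views_sound i"
proof (induction i)
  case 0
  then show ?case unfolding views_sound_def phase_sound_def by (simp add: run_0 init_state_def)
qed (rule views_sound_Suc)

definition stored_at :: "nat \<Rightarrow> 'w tag \<Rightarrow> bool" where
  "stored_at i t \<longleftrightarrow> (\<exists>Q \<subseteq> C. card Q = q \<and> (\<forall>j \<in> Q - Byz. covers \<delta> (etag ` lists (run i) j) t))"

definition write_put_starts :: "nat \<Rightarrow> 'w \<Rightarrow> nat \<Rightarrow> 'v \<Rightarrow> bool" where
  "write_put_starts i c r v \<longleftrightarrow> (\<exists>M. card (dom M) = q \<and> dom M \<subseteq> C \<and> tag_replies_sound i c r M \<and>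
     round_tag c (Suc r) = (Suc (fst (max_reply_tag M)), c) \<and>
     signed (run (Suc i)) = signed (run i) \<union> {(round_tag c (Suc r), j, enc v j) | j. j \<in> C})"

definition read_put_starts :: "nat \<Rightarrow> 'w \<Rightarrow> nat \<Rightarrow> 'v \<Rightarrow> bool" where
  "read_put_starts i c r v \<longleftrightarrow> (\<exists>M. card (dom M) = q \<and> dom M \<subseteq> C \<and> data_replies_sound i c r M \<and>
     (\<forall>j X. M j = Some X \<longrightarrow> X \<subseteq> signed (run i) \<and> (\<forall>e \<in> X. eidx e = j)) \<and>
     candidate_tags k M \<noteq> {} \<and> round_tag c (Suc r) = Max (candidate_tags k M) \<and>
     v = decoded_value dec M (Max (candidate_tags k M)) \<and>
     signed (run (Suc i)) = signed (run i) \<union> {(round_tag c (Suc r), j, enc v j) | j. j \<in> C})"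

definition client_move :: "nat \<Rightarrow> 'w \<Rightarrow> bool" where
  "client_move i c \<longleftrightarrow> (let p = phs (run i) c; p' = phs (run (Suc i)) c;
      r0 = rnd (run i) c; r1 = rnd (run (Suc i)) c in
    (p' = p \<and> r1 = r0)
  \<or> (p = Idle \<and> r1 = Suc r0 \<and> ((\<exists>v. p' = WTag r1 v Map.empty) \<or> p' = RGet r1 Map.empty))
  \<or> (\<exists>r v M M'. p = WTag r v M \<and> p' = WTag r v M' \<and> r1 = r0)
  \<or> (\<exists>r v M. p = WTag r v M \<and> p' = WPut (Suc r) {} \<and> r1 = Suc r0 \<and> write_put_starts i c r v)
  \<or> (\<exists>r A A'. p = WPut r A \<and> p' = WPut r A' \<and> r1 = r0)
  \<or> (\<exists>r A. p = WPut r A \<and> p' = Idle \<and> r1 = r0 \<and> stored_at i (round_tag c r))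
  \<or> (\<exists>r M M'. p = RGet r M \<and> p' = RGet r M' \<and> r1 = r0)
  \<or> (\<exists>r M v. p = RGet r M \<and> p' = RPut (Suc r) v {} \<and> r1 = Suc r0 \<and> read_put_starts i c r v)
  \<or> (\<exists>r v A A'. p = RPut r v A \<and> p' = RPut r v A' \<and> r1 = r0)
  \<or> (\<exists>r v A. p = RPut r v A \<and> p' = Idle \<and> r1 = r0 \<and> stored_at i (round_tag c r)))"

lemma stored_at_acks: "A \<subseteq> C \<Longrightarrow> card A = q \<Longrightarrow> acks_sound i c r A \<Longrightarrow> stored_at i (round_tag c r)"
  unfolding stored_at_def acks_sound_def by blast

lemma client_move_client_recv:
  assumes "(c, j, m) \<in> toClient (run i)"
    "run (Suc i) = client_recv C k enc dec c j m ((run i)\<lparr>toClient := toClient (run i) - {(c, j, m)}\<rparr>)"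
  shows "client_move i c"
proof -
  have j: "j \<in> C" using wf_to_client_run[of i] assms(1) unfolding wf_to_client_def by blast
  have reply: "reply_sound i c j m" if "j \<notin> Byz"
    using views_sound_run[of i] assms(1) that unfolding views_sound_def by blast
  have phase: "phase_sound i c" using views_sound_run[of i] unfolding views_sound_def by blast
  have wf: "wf_phase (run i) c" by (rule wf_phase_run)
  from assms(2) show ?thesis
  proof (cases rule: client_recv_cases)
    case (tag_quorum r v M eo M')
    have r: "r = rnd (run i) c" "dom M \<subseteq> C" using wf tag_quorum(1) unfolding wf_phase_def by auto
    have "tag_replies_sound i c r M'"
      using tag_quorum tag_replies_sound_upd[of i c r M j eo] phase reply j by (simp add: phase_sound_def)
    moreover have "round_tag c (Suc r) = (Suc (fst (max_reply_tag M')), c)"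
      using round_tag_start_put[OF tag_quorum(5)] r by simp
    ultimately have "write_put_starts i c r v"
      unfolding write_put_starts_def using tag_quorum(3,4,5) r j
      by (intro exI[of _ M']) (auto simp: start_put_simps)
    then show ?thesis unfolding client_move_def Let_def using tag_quorum(1,5) r by (simp add: start_put_simps)
  next
    case (data_quorum r M S M')
    have r: "r = rnd (run i) c" "dom M \<subseteq> C"
      "\<forall>j X. M j = Some X \<longrightarrow> X \<subseteq> signed (run i) \<and> (\<forall>e \<in> X. eidx e = j)"
      using wf data_quorum(1) unfolding wf_phase_def by auto
    have "data_replies_sound i c r M'"
      using data_quorum data_replies_sound_upd[of i c r M j S] phase reply j by (simp add: phase_sound_def)
    moreover have "round_tag c (Suc r) = Max (candidate_tags k M')"
      using round_tag_start_put[OF data_quorum(6)] r by simp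
    moreover have "\<forall>j X. M' j = Some X \<longrightarrow> X \<subseteq> signed (run i) \<and> (\<forall>e \<in> X. eidx e = j)"
      using r(3) data_quorum(3) by (auto simp: verified_list_def)
    ultimately have "read_put_starts i c r (decoded_value dec M' (Max (candidate_tags k M')))"
      unfolding read_put_starts_def using data_quorum(3-6) r j
      by (intro exI[of _ M']) (auto simp: start_put_simps)
    then show ?thesis unfolding client_move_def Let_def using data_quorum(1,6) r by (simp add: start_put_simps)
  next
    case (write_done r A)
    have "insert j A \<subseteq> C" using wf write_done(1) j unfolding wf_phase_def by auto
    moreover have "acks_sound i c r (insert j A)"
      using write_done acks_sound_insert phase reply by (simp add: phase_sound_def)
    ultimately have "stored_at i (round_tag c r)" using stored_at_acks write_done(3) by blast
    then show ?thesis unfolding client_move_def Let_def using write_done(1,4) by simp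
  next
    case (read_done r v A)
    have "insert j A \<subseteq> C" using wf read_done(1) j unfolding wf_phase_def by auto
    moreover have "acks_sound i c r (insert j A)"
      using read_done acks_sound_insert phase reply by (simp add: phase_sound_def)
    ultimately have "stored_at i (round_tag c r)" using stored_at_acks read_done(3) by blast
    then show ?thesis unfolding client_move_def Let_def using read_done(1,4) by simp
  qed (simp_all add: client_move_def)
qed

lemma client_move_run: "client_move i c"
  using run_step[of i]
proof (cases rule: next_step_cases)
  case (invoke c' ph qm)
  then show ?thesis by (cases "c = c'") (auto simp: client_move_def invoke_simps invocation_def)
next
  case (node j src m)
  then show ?thesis using node_recv_fields[OF node(3)] by (simp add: client_move_def)
next
  case (client c' j m)
  show ?thesis
  proof (cases "c = c'")
    case False
    then show ?thesis using client_recv_frame[OF client(2)] by (simp add: client_move_def)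
  qed (use client client_move_client_recv in blast)
next
  case byz
  then show ?thesis by (cases rule: byz_step_cases) (simp_all add: client_move_def)
qed (simp add: client_move_def)

definition op_round :: "'w op \<Rightarrow> nat" where
  "op_round \<pi> = rnd (run (Suc (snd \<pi>))) (fst \<pi>)"

text \<open>The tag of an operation is the tag of its put-data phase, which is the round after
  its first phase.\<close>
definition op_tag :: "'w op \<Rightarrow> 'w tag" where
  "op_tag \<pi> = round_tag (fst \<pi>) (Suc (op_round \<pi>))"

definition active :: "'w \<Rightarrow> nat \<Rightarrow> nat \<Rightarrow> bool" where
  "active c i t \<longleftrightarrow> (\<forall>t'. i < t' \<and> t' \<le> t \<longrightarrow> phs (run t') c \<noteq> Idle)"

lemma invoked_phase:
  assumes "invoked run c i"
  shows "op_round (c, i) = Suc (rnd (run i) c)"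
    "is_write run (c, i) \<Longrightarrow> phs (run (Suc i)) c = WTag (op_round (c, i)) (written_val run (c, i)) Map.empty"
    "is_read run (c, i) \<Longrightarrow> phs (run (Suc i)) c = RGet (op_round (c, i)) Map.empty"
  using client_move_run[of i c] assms
  unfolding client_move_def Let_def invoked_def op_round_def is_write_def is_read_def written_val_def
  by auto

lemma write_not_read: "is_write run \<pi> \<Longrightarrow> \<not> is_read run \<pi>"
  unfolding is_write_def is_read_def by auto

lemma op_kind: "\<pi> \<in> ops run \<Longrightarrow> is_write run \<pi> \<or> is_read run \<pi>"
  using client_move_run[of "snd \<pi>" "fst \<pi>"]
  unfolding ops_def invoked_def client_move_def Let_def is_write_def is_read_def by auto

definition write_put_at :: "'w op \<Rightarrow> nat \<Rightarrow> bool" where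
  "write_put_at \<omega> p \<longleftrightarrow> invoked run (fst \<omega>) (snd \<omega>) \<and> is_write run \<omega> \<and> snd \<omega> < p \<and>
     write_put_starts p (fst \<omega>) (op_round \<omega>) (written_val run \<omega>)"

definition read_put_at :: "'w op \<Rightarrow> nat \<Rightarrow> 'v \<Rightarrow> bool" where
  "read_put_at \<rho> p v \<longleftrightarrow> invoked run (fst \<rho>) (snd \<rho>) \<and> is_read run \<rho> \<and> snd \<rho> < p \<and>
     read_put_starts p (fst \<rho>) (op_round \<rho>) v"

lemma write_phase:
  assumes "phs (run (Suc i)) c = WTag r v Map.empty" "i < t" "active c i t"
  shows "(\<exists>M. phs (run t) c = WTag r v M \<and> rnd (run t) c = r) \<or>
    (\<exists>A. phs (run t) c = WPut (Suc r) A \<and> rnd (run t) c = Suc r \<and>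
       (\<exists>p. i < p \<and> p < t \<and> write_put_starts p c r v))"
  using Suc_leI[OF assms(2)] assms(3)
proof (induction t rule: dec_induct)
  case base
  have "r = rnd (run (Suc i)) c" using wf_phase_run[of "Suc i" c] assms(1) unfolding wf_phase_def by simp
  then show ?case using assms(1) by auto
next
  case (step n)
  have active: "active c i n" and busy: "phs (run (Suc n)) c \<noteq> Idle"
    using step.prems step.hyps unfolding active_def by auto
  from step.IH[OF active] show ?case
  proof (elim disjE exE conjE)
    fix M assume "phs (run n) c = WTag r v M" "rnd (run n) c = r"
    then show ?thesis using client_move_run[of n c] busy step.hyps unfolding client_move_def Let_def
      by (auto 0 3 intro: exI[of _ n])
  next
    fix A p assume "phs (run n) c = WPut (Suc r) A" "rnd (run n) c = Suc r" "i < p" "p < n"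
      "write_put_starts p c r v"
    then show ?thesis using client_move_run[of n c] busy unfolding client_move_def Let_def
      by (auto intro: less_SucI)
  qed
qed

lemma read_phase:
  assumes "phs (run (Suc i)) c = RGet r Map.empty" "i < t" "active c i t"
  shows "(\<exists>M. phs (run t) c = RGet r M \<and> rnd (run t) c = r) \<or>
    (\<exists>v A. phs (run t) c = RPut (Suc r) v A \<and> rnd (run t) c = Suc r \<and>
       (\<exists>p. i < p \<and> p < t \<and> read_put_starts p c r v))"
  using Suc_leI[OF assms(2)] assms(3)
proof (induction t rule: dec_induct)
  case base
  have "r = rnd (run (Suc i)) c" using wf_phase_run[of "Suc i" c] assms(1) unfolding wf_phase_def by simp
  then show ?case using assms(1) by auto
next
  case (step n)
  have active: "active c i n" and busy: "phs (run (Suc n)) c \<noteq> Idle"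
    using step.prems step.hyps unfolding active_def by auto
  from step.IH[OF active] show ?case
  proof (elim disjE exE conjE)
    fix M assume "phs (run n) c = RGet r M" "rnd (run n) c = r"
    then show ?thesis using client_move_run[of n c] busy step.hyps unfolding client_move_def Let_def
      by (auto 0 3 intro: exI[of _ n])
  next
    fix v A p assume "phs (run n) c = RPut (Suc r) v A" "rnd (run n) c = Suc r" "i < p" "p < n"
      "read_put_starts p c r v"
    then show ?thesis using client_move_run[of n c] busy unfolding client_move_def Let_def
      by (auto intro: less_SucI)
  qed
qed

lemma resp_time:
  assumes "complete run (c, i)"
  shows "i < resp_time run (c, i)" "responds run c (resp_time run (c, i))"
    "\<And>j. i < j \<Longrightarrow> responds run c j \<Longrightarrow> resp_time run (c, i) \<le> j"
proof -
  have ex: "\<exists>j. i < j \<and> responds run c j" using assms unfolding complete_def by auto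
  show "i < resp_time run (c, i)" "responds run c (resp_time run (c, i))"
    unfolding resp_time_def using LeastI_ex[OF ex] by auto
  show "resp_time run (c, i) \<le> j" if "i < j" "responds run c j" for j
    unfolding resp_time_def using that by (intro Least_le) simp
qed

lemma first_idle_responds:
  assumes "invoked run c i" "i < t" "phs (run t) c = Idle"
  obtains j where "i < j" "j < t" "responds run c j"
proof -
  define t0 where "t0 = (LEAST t'. i < t' \<and> phs (run t') c = Idle)"
  have t0: "i < t0" "phs (run t0) c = Idle" "t0 \<le> t"
    using LeastI[of "\<lambda>t'. i < t' \<and> phs (run t') c = Idle" t] Least_le[of "\<lambda>t'. i < t' \<and> phs (run t') c = Idle" t]
      assms unfolding t0_def by auto
  have "t0 \<noteq> Suc i" using assms(1) t0(2) unfolding invoked_def by auto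
  then obtain j where j: "t0 = Suc j" "i < j" using t0(1) by (cases t0) auto
  have "phs (run j) c \<noteq> Idle"
  proof
    assume "phs (run j) c = Idle"
    then have "t0 \<le> j" unfolding t0_def using j(2) by (intro Least_le) auto
    then show False using j(1) by simp
  qed
  then show thesis using that[of j] t0 j unfolding responds_def by simp
qed

lemma complete_active:
  assumes "invoked run c i" "complete run (c, i)"
  shows "active c i (resp_time run (c, i))"
  unfolding active_def
proof (intro allI impI notI)
  fix t' assume t': "i < t' \<and> t' \<le> resp_time run (c, i)" "phs (run t') c = Idle"
  then obtain j where "i < j" "j < t'" "responds run c j" using first_idle_responds[OF assms(1)] by blast
  then show False using resp_time(3)[OF assms(2)] t' by fastforce
qed

lemma response_stored:
  assumes "complete run (c, i)"
  obtains r where "(\<exists>A. phs (run (resp_time run (c, i))) c = WPut r A) \<or>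
      (\<exists>v A. phs (run (resp_time run (c, i))) c = RPut r v A)"
    "stored_at (resp_time run (c, i)) (round_tag c r)"
  using client_move_run[of "resp_time run (c, i)" c] resp_time(2)[OF assms] that
  unfolding client_move_def Let_def responds_def by auto

lemma complete_write:
  assumes "invoked run c i" "complete run (c, i)" "is_write run (c, i)"
  shows "stored_at (resp_time run (c, i)) (op_tag (c, i))"
    "\<exists>p < resp_time run (c, i). write_put_at (c, i) p"
proof -
  note phase = write_phase[OF invoked_phase(2)[OF assms(1,3)] resp_time(1)[OF assms(2)]
      complete_active[OF assms(1,2)]]
  obtain r where r: "(\<exists>A. phs (run (resp_time run (c, i))) c = WPut r A) \<or>
      (\<exists>v A. phs (run (resp_time run (c, i))) c = RPut r v A)"
    "stored_at (resp_time run (c, i)) (round_tag c r)"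
    using response_stored[OF assms(2)] by blast
  show "stored_at (resp_time run (c, i)) (op_tag (c, i))" using phase r unfolding op_tag_def by auto
  show "\<exists>p < resp_time run (c, i). write_put_at (c, i) p"
    using phase r assms(1,3) unfolding write_put_at_def by auto
qed

lemma complete_read:
  assumes "invoked run c i" "complete run (c, i)" "is_read run (c, i)"
  shows "stored_at (resp_time run (c, i)) (op_tag (c, i))"
    "\<exists>p < resp_time run (c, i). read_put_at (c, i) p (returned_val run (c, i))"
proof -
  note phase = read_phase[OF invoked_phase(3)[OF assms(1,3)] resp_time(1)[OF assms(2)]
      complete_active[OF assms(1,2)]]
  obtain r where r: "(\<exists>A. phs (run (resp_time run (c, i))) c = WPut r A) \<or>
      (\<exists>v A. phs (run (resp_time run (c, i))) c = RPut r v A)"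
    "stored_at (resp_time run (c, i)) (round_tag c r)"
    using response_stored[OF assms(2)] by blast
  show "stored_at (resp_time run (c, i)) (op_tag (c, i))" using phase r unfolding op_tag_def by auto
  show "\<exists>p < resp_time run (c, i). read_put_at (c, i) p (returned_val run (c, i))"
    using phase r assms(1,3) unfolding read_put_at_def returned_val_def by auto
qed

lemma later_than_invocation:
  assumes "invoked run c i" "op_round (c, i) \<le> rnd (run i') c"
  shows "i < i'"
proof (rule ccontr)
  assume "\<not> i < i'"
  then have "rnd (run i') c \<le> rnd (run i) c" using rnd_mono by simp
  then show False using invoked_phase(1)[OF assms(1)] assms(2) by simp
qed

lemma stored_at_quorum:
  assumes "stored_at t tg" "B \<subseteq> C" "card B = q"
  obtains Q where "k < card ((Q \<inter> B) - Byz)"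
    "\<And>j i'. j \<in> (Q \<inter> B) - Byz \<Longrightarrow> t \<le> i' \<Longrightarrow> covers \<delta> (etag ` lists (run i') j) tg"
proof -
  obtain Q where Q: "Q \<subseteq> C" "card Q = q" "\<forall>j \<in> Q - Byz. covers \<delta> (etag ` lists (run t) j) tg"
    using assms(1) unfolding stored_at_def by blast
  show thesis
  proof (rule that[of Q])
    show "k < card ((Q \<inter> B) - Byz)" using quorum_honest_overlap[OF Q(1) assms(2) Q(2) assms(3)] .
    show "covers \<delta> (etag ` lists (run i') j) tg" if "j \<in> (Q \<inter> B) - Byz" "t \<le> i'" for j i'
    proof -
      have "j \<in> C - Byz" using that(1) Q(1) by blast
      then show ?thesis using covers_stable[OF _ _ that(2)] Q(3) that(1) by blast
    qed
  qed
qed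

lemma write_tag_gt:
  assumes "write_put_at (c, i) p" "stored_at t tg" "t \<le> i"
  shows "tg < op_tag (c, i)"
proof -
  obtain M where M: "card (dom M) = q" "dom M \<subseteq> C" "tag_replies_sound p c (op_round (c, i)) M"
    "op_tag (c, i) = (Suc (fst (max_reply_tag M)), c)"
    using assms(1) unfolding write_put_at_def write_put_starts_def op_tag_def by auto
  obtain Q where Q: "k < card ((Q \<inter> dom M) - Byz)"
    "\<And>j i'. j \<in> (Q \<inter> dom M) - Byz \<Longrightarrow> t \<le> i' \<Longrightarrow> covers \<delta> (etag ` lists (run i') j) tg"
    using stored_at_quorum[OF assms(2) M(2,1)] by blast
  then have "(Q \<inter> dom M) - Byz \<noteq> {}" by (metis card.empty less_nat_zero_code)
  then obtain j where j: "j \<in> (Q \<inter> dom M) - Byz" by blast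
  then obtain i' where i': "op_round (c, i) \<le> rnd (run i') c"
    "M j = Some (Some (etag (max_entry (lists (run i') j))))"
    using M(3) unfolding tag_replies_sound_def by blast
  have "i < i'" using later_than_invocation[OF _ i'(1)] assms(1) unfolding write_put_at_def by auto
  then have "t \<le> i'" using assms(3) by simp
  have "finite (lists (run i') j)" "lists (run i') j \<noteq> {}"
    using wf_lists_run[of i'] j M(2) unfolding wf_lists_def by blast+
  then have "tg \<le> etag (max_entry (lists (run i') j))"
    using Q(2)[OF j \<open>t \<le> i'\<close>] by (rule covers_le_max_entry)
  also have "\<dots> \<le> max_reply_tag M"
    using max_reply_tag_ge[OF finite_subset[OF M(2) finite_C] i'(2)] .
  finally show ?thesis using M(4) tag_less_next by simp
qed

lemma candidate_tags_finite:
  assumes "\<forall>j X. M j = Some X \<longrightarrow> X \<subseteq> signed (run p)"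
  shows "finite (candidate_tags k M)"
proof (rule finite_subset)
  show "candidate_tags k M \<subseteq> etag ` signed (run p)" using assms k_pos by (rule candidate_tags_subset)
  show "finite (etag ` signed (run p))" using wf_signed_run[of p] unfolding wf_signed_def by simp
qed

text \<open>The bound on the tags above \<open>tg\<close> keeps \<open>tg\<close> itself in the covering honest lists,
  so more than \<open>k\<close> replies contain it and it is a decoding candidate.\<close>
lemma read_tag_ge:
  assumes "read_put_at (c, i) p v" "stored_at t tg" "t \<le> i"
    and few_above: "\<And>j i'. j \<in> C - Byz \<Longrightarrow> i < i' \<Longrightarrow> i' \<le> p \<Longrightarrow>
      card {x \<in> etag ` lists (run i') j. tg < x} \<le> \<delta>"
  shows "tg \<le> op_tag (c, i)"
proof -
  have "read_put_starts p c (op_round (c, i)) v" using assms(1) unfolding read_put_at_def by simp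
  then obtain M where M: "card (dom M) = q" "dom M \<subseteq> C" "data_replies_sound p c (op_round (c, i)) M"
    "\<forall>j X. M j = Some X \<longrightarrow> X \<subseteq> signed (run p) \<and> (\<forall>e \<in> X. eidx e = j)"
    "op_tag (c, i) = Max (candidate_tags k M)"
    unfolding read_put_starts_def op_tag_def fst_conv by blast
  obtain Q where Q: "k < card ((Q \<inter> dom M) - Byz)"
    "\<And>j i'. j \<in> (Q \<inter> dom M) - Byz \<Longrightarrow> t \<le> i' \<Longrightarrow> covers \<delta> (etag ` lists (run i') j) tg"
    using stored_at_quorum[OF assms(2) M(2,1)] by blast
  define Y where "Y = {j \<in> dom M. \<exists>e \<in> the (M j). etag e = tg}"
  have sub: "(Q \<inter> dom M) - Byz \<subseteq> Y"
  proof
    fix j assume j: "j \<in> (Q \<inter> dom M) - Byz"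
    then obtain i' where i': "i' \<le> p" "op_round (c, i) \<le> rnd (run i') c" "M j = Some (lists (run i') j)"
      using M(3) unfolding data_replies_sound_def by blast
    have "i < i'" using later_than_invocation[OF _ i'(2)] assms(1) unfolding read_put_at_def by auto
    then have "t \<le> i'" using assms(3) by simp
    have "j \<in> C - Byz" using j M(2) by blast
    then have "card {x \<in> etag ` lists (run i') j. tg < x} \<le> \<delta>"
      using few_above \<open>i < i'\<close> i'(1) by blast
    then have "tg \<in> etag ` lists (run i') j" using covers_imp_mem Q(2)[OF j \<open>t \<le> i'\<close>] by blast
    then show "j \<in> Y" using i'(3) j unfolding Y_def by auto
  qed
  have "finite Y" using M(2) finite_C finite_subset unfolding Y_def by fastforce
  then have "k < card Y" using card_mono[OF _ sub] Q(1) by linarith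
  then have "tg \<in> candidate_tags k M" unfolding candidate_tags_def Y_def by simp
  moreover have "finite (candidate_tags k M)" using M(4) candidate_tags_finite[of M p] by blast
  ultimately show ?thesis using M(5) by simp
qed

lemma invoked_before_complete:
  assumes "invoked run c i1" "invoked run c i2" "i1 < i2"
  shows "complete run (c, i1)" "resp_time run (c, i1) < i2"
proof -
  obtain j where j: "i1 < j" "j < i2" "responds run c j"
    using first_idle_responds[OF assms(1,3)] assms(2) unfolding invoked_def by blast
  then show "complete run (c, i1)" unfolding complete_def by auto
  then show "resp_time run (c, i1) < i2" using resp_time(3) j by fastforce
qed

lemma write_tag:
  assumes "write_put_at \<omega> p"
  shows "snd (op_tag \<omega>) = fst \<omega>" "0 < fst (op_tag \<omega>)"
  using assms unfolding write_put_at_def write_put_starts_def op_tag_def by auto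

lemma write_tags_unique:
  assumes "write_put_at \<omega>1 p1" "write_put_at \<omega>2 p2" "op_tag \<omega>1 = op_tag \<omega>2"
  shows "\<omega>1 = \<omega>2"
proof -
  have earlier: "\<not> i1 < i2" if "write_put_at (c, i1) p1" "write_put_at (c, i2) p2"
    "op_tag (c, i1) = op_tag (c, i2)" for c i1 i2 p1 p2
  proof
    assume "i1 < i2"
    have inv: "invoked run c i1" "invoked run c i2" "is_write run (c, i1)"
      using that unfolding write_put_at_def by auto
    note before = invoked_before_complete[OF inv(1,2) \<open>i1 < i2\<close>]
    have "op_tag (c, i1) < op_tag (c, i2)"
      using write_tag_gt[OF that(2) complete_write(1)[OF inv(1) before(1) inv(3)]] before(2) by simp
    then show False using that(3) by simp
  qed
  obtain c1 i1 c2 i2 where \<omega>: "\<omega>1 = (c1, i1)" "\<omega>2 = (c2, i2)" by fastforce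
  then have "c1 = c2" using write_tag(1)[OF assms(1)] write_tag(1)[OF assms(2)] assms(3) by simp
  then show ?thesis using earlier[of c1 i1 p1 i2 p2] earlier[of c1 i2 p2 i1 p1] assms \<omega>
    by (auto simp: neq_iff)
qed

lemma current_op:
  assumes "phs (run n) c \<noteq> Idle"
  obtains i where "i < n" "invoked run c i" "active c i n"
  using assms
proof (induction n arbitrary: thesis)
  case 0 then show ?case by (simp add: run_0 init_state_def)
next
  case (Suc n)
  show ?case
  proof (cases "phs (run n) c = Idle")
    case True
    then have "invoked run c n" using Suc.prems unfolding invoked_def by simp
    then show ?thesis using Suc.prems by (intro Suc.prems(1)[of n]) (auto simp: active_def le_Suc_eq)
  next
    case False
    then obtain i where "i < n" "invoked run c i" "active c i n" using Suc.IH by blast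
    then show ?thesis using Suc.prems by (intro Suc.prems(1)[of i]) (auto simp: active_def le_Suc_eq)
  qed
qed

lemma write_put_at_step:
  assumes "phs (run n) c = WTag r v M" "write_put_starts n c r v"
  obtains i where "write_put_at (c, i) n" "op_round (c, i) = r" "written_val run (c, i) = v"
proof -
  obtain i where i: "i < n" "invoked run c i" "active c i n" using current_op[of n c] assms(1) by auto
  have "\<not> is_read run (c, i)"
    using read_phase[OF invoked_phase(3)[OF i(2)] i(1,3)] assms(1) by auto
  then have w: "is_write run (c, i)" using op_kind[of "(c, i)"] i(2) unfolding ops_def by auto
  then have "op_round (c, i) = r \<and> written_val run (c, i) = v"
    using write_phase[OF invoked_phase(2)[OF i(2) w] i(1,3)] assms(1) by auto
  then show thesis using that[of i] i w assms(2) unfolding write_put_at_def by auto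
qed

section \<open>Origin of signed coded elements\<close>

lemma signed_Suc_cases:
  obtains (same) "signed (run (Suc n)) = signed (run n)"
  | (write_start) c r v M where "phs (run n) c = WTag r v M" "write_put_starts n c r v"
  | (read_start) c r v M where "phs (run n) c = RGet r M" "read_put_starts n c r v"
  using run_step[of n]
proof (cases rule: next_step_cases)
  case (client c j m)
  from client(2) show ?thesis
  proof (cases rule: client_recv_cases)
    case (tag_quorum r v M eo M')
    then have "r = rnd (run n) c" using wf_phase_run[of n c] unfolding wf_phase_def by simp
    then show ?thesis using client_move_run[of n c] tag_quorum(1,5) that(2)
      unfolding client_move_def Let_def by (auto simp: start_put_simps)
  next
    case (data_quorum r M S M')
    then have "r = rnd (run n) c" using wf_phase_run[of n c] unfolding wf_phase_def by simp
    then show ?thesis using client_move_run[of n c] data_quorum(1,6) that(3)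
      unfolding client_move_def Let_def by (auto simp: start_put_simps)
  qed (use that(1) in simp_all)
next
  case (node j src m)
  then show ?thesis using that(1) node_recv_fields[OF node(3)] by simp
next
  case byz
  then show ?thesis using that(1) by (cases rule: byz_step_cases) auto
qed (use that(1) in \<open>auto simp: invoke_simps\<close>)

definition signed_origin :: "nat \<Rightarrow> bool" where
  "signed_origin n \<longleftrightarrow> (\<forall>e \<in> signed (run n). (etag e = (0, w0) \<and> eelem e = enc v0 (eidx e)) \<or>
     (\<exists>\<omega> p. write_put_at \<omega> p \<and> p < n \<and> op_tag \<omega> = etag e \<and> eelem e = enc (written_val run \<omega>) (eidx e)))"

lemma candidate_coded_elements:
  assumes "\<forall>j X. M j = Some X \<longrightarrow> X \<subseteq> signed (run p) \<and> (\<forall>e \<in> X. eidx e = j)" "t \<in> candidate_tags k M"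
  shows "k \<le> card {(eidx e, eelem e) | e. e \<in> \<Union>(ran M) \<and> etag e = t}" (is "_ \<le> card ?X")
proof -
  have "?X \<subseteq> (\<lambda>e. (eidx e, eelem e)) ` signed (run p)" using assms(1) unfolding ran_def by blast
  then have "finite ?X"
    by (rule finite_subset) (use wf_signed_run[of p] in \<open>simp add: wf_signed_def\<close>)
  have sub: "{j \<in> dom M. \<exists>e \<in> the (M j). etag e = t} \<subseteq> fst ` ?X"
  proof
    fix j assume "j \<in> {j \<in> dom M. \<exists>e \<in> the (M j). etag e = t}"
    then obtain X e where "M j = Some X" "e \<in> X" "etag e = t" by auto
    then have "(eidx e, eelem e) \<in> ?X" "eidx e = j" using assms(1) unfolding ran_def by blast+
    then show "j \<in> fst ` ?X" by force
  qed
  have "k \<le> card {j \<in> dom M. \<exists>e \<in> the (M j). etag e = t}"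
    using assms(2) unfolding candidate_tags_def by simp
  also have "\<dots> \<le> card (fst ` ?X)" by (rule card_mono[OF finite_imageI[OF \<open>finite ?X\<close>] sub])
  also have "\<dots> \<le> card ?X" by (rule card_image_le[OF \<open>finite ?X\<close>])
  finally show ?thesis .
qed

lemma signed_origin_tag:
  assumes "signed_origin p" "e \<in> signed (run p)" "etag e = t"
  shows "eidx e \<in> C"
    "t = (0, w0) \<Longrightarrow> eelem e = enc v0 (eidx e)"
    "t \<noteq> (0, w0) \<Longrightarrow> \<exists>\<omega> p'. write_put_at \<omega> p' \<and> p' < p \<and> op_tag \<omega> = t \<and> eelem e = enc (written_val run \<omega>) (eidx e)"
proof -
  have origin: "(etag e = (0, w0) \<and> eelem e = enc v0 (eidx e)) \<or>
      (\<exists>\<omega> p'. write_put_at \<omega> p' \<and> p' < p \<and> op_tag \<omega> = etag e \<and> eelem e = enc (written_val run \<omega>) (eidx e))"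
    using assms(1,2) unfolding signed_origin_def by blast
  show "eidx e \<in> C" using assms(2) wf_signed_run[of p] unfolding wf_signed_def by blast
  show "t = (0, w0) \<Longrightarrow> eelem e = enc v0 (eidx e)" using origin assms(3) by (auto dest: write_tag(2))
  show "t \<noteq> (0, w0) \<Longrightarrow> \<exists>\<omega> p'. write_put_at \<omega> p' \<and> p' < p \<and> op_tag \<omega> = t \<and>
      eelem e = enc (written_val run \<omega>) (eidx e)" using origin assms(3) by auto
qed

text \<open>All signed coded elements with one tag come from one encoding, so decoding them
  yields the value of that encoding.\<close>
lemma read_put_value:
  assumes "signed_origin p" "read_put_starts p c r v"
  shows "(round_tag c (Suc r) = (0, w0) \<and> v = v0) \<or>
    (\<exists>\<omega> p'. write_put_at \<omega> p' \<and> p' < p \<and> op_tag \<omega> = round_tag c (Suc r) \<and> v = written_val run \<omega>)"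
proof -
  obtain M where M: "\<forall>j X. M j = Some X \<longrightarrow> X \<subseteq> signed (run p) \<and> (\<forall>e \<in> X. eidx e = j)"
    "candidate_tags k M \<noteq> {}" "round_tag c (Suc r) = Max (candidate_tags k M)"
    "v = decoded_value dec M (Max (candidate_tags k M))"
    using assms(2) unfolding read_put_starts_def by blast
  define t where "t = Max (candidate_tags k M)"
  have "finite (candidate_tags k M)" using M(1) candidate_tags_finite[of M p] by blast
  then have "t \<in> candidate_tags k M" using M(2) unfolding t_def by (rule Max_in)
  then have k_le: "k \<le> card {(eidx e, eelem e) | e. e \<in> \<Union>(ran M) \<and> etag e = t}"
    by (rule candidate_coded_elements[OF M(1)])
  have signed: "e \<in> signed (run p)" if "e \<in> \<Union>(ran M)" for e using that M(1) unfolding ran_def by blast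
  show ?thesis
  proof (cases "t = (0, w0)")
    case True
    then have "decoded_value dec M t = v0"
      using signed_origin_tag[OF assms(1) signed] by (intro decoded_value_eq[OF mds k_le]) auto
    then show ?thesis using True M(3,4) unfolding t_def by simp
  next
    case False
    have "0 < card {(eidx e, eelem e) | e. e \<in> \<Union>(ran M) \<and> etag e = t}" using k_le k_pos by linarith
    then obtain e0 where "e0 \<in> \<Union>(ran M)" "etag e0 = t" unfolding card_gt_0_iff by blast
    then obtain \<omega> p' where \<omega>: "write_put_at \<omega> p'" "p' < p" "op_tag \<omega> = t"
      using signed_origin_tag(3)[OF assms(1) signed] False by blast
    have "eidx e \<in> C \<and> eelem e = enc (written_val run \<omega>) (eidx e)"
      if e: "e \<in> \<Union>(ran M)" "etag e = t" for e
    proof -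
      obtain \<omega>' p'' where "write_put_at \<omega>' p''" "op_tag \<omega>' = t" "eelem e = enc (written_val run \<omega>') (eidx e)"
        using signed_origin_tag(3)[OF assms(1) signed[OF e(1)] e(2) False] by blast
      moreover have "\<omega>' = \<omega>" using write_tags_unique calculation(1,2) \<omega>(1,3) by simp
      ultimately show ?thesis using signed_origin_tag(1)[OF assms(1) signed[OF e(1)] e(2)] by simp
    qed
    then have "decoded_value dec M t = written_val run \<omega>" by (intro decoded_value_eq[OF mds k_le])
    then have "v = written_val run \<omega>" using M(4) unfolding t_def by simp
    then show ?thesis using \<omega> M(3) unfolding t_def by (intro disjI2 exI[of _ \<omega>] exI[of _ p']) simp
  qed
qed

lemma signed_origin_run: "signed_origin n"
proof (induction n)
  case 0
  then show ?case unfolding signed_origin_def by (auto simp: run_0 init_state_def etag_def eelem_def eidx_def)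
next
  case (Suc n)
  let ?origin = "\<lambda>e p. (etag e = (0, w0) \<and> eelem e = enc v0 (eidx e)) \<or>
    (\<exists>\<omega> p'. write_put_at \<omega> p' \<and> p' < p \<and> op_tag \<omega> = etag e \<and> eelem e = enc (written_val run \<omega>) (eidx e))"
  have new: "signed_origin (Suc n)"
    if N: "signed (run (Suc n)) = signed (run n) \<union> N" and N_origin: "\<And>e. e \<in> N \<Longrightarrow> ?origin e (Suc n)" for N
  proof -
    have "?origin e (Suc n)" if "e \<in> signed (run n)" for e
      using Suc.IH that less_SucI unfolding signed_origin_def by blast
    then show ?thesis using N N_origin unfolding signed_origin_def by blast
  qed
  show ?case
  proof (cases rule: signed_Suc_cases[of n])
    case same
    then show ?thesis using new[of "{}"] by simp
  next
    case (write_start c r v M)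
    then obtain i where i: "write_put_at (c, i) n" "op_round (c, i) = r" "written_val run (c, i) = v"
      by (rule write_put_at_step)
    have "signed (run (Suc n)) = signed (run n) \<union> {(round_tag c (Suc r), j, enc v j) | j. j \<in> C}"
      using write_start(2) unfolding write_put_starts_def by blast
    moreover have "?origin e (Suc n)" if "e \<in> {(round_tag c (Suc r), j, enc v j) | j. j \<in> C}" for e
      using that i unfolding op_tag_def
      by (intro disjI2 exI[of _ "(c, i)"] exI[of _ n]) (auto simp: etag_def eelem_def eidx_def)
    ultimately show ?thesis by (rule new)
  next
    case (read_start c r v M)
    have "signed (run (Suc n)) = signed (run n) \<union> {(round_tag c (Suc r), j, enc v j) | j. j \<in> C}"
      using read_start(2) unfolding read_put_starts_def by blast
    moreover have "?origin e (Suc n)" if "e \<in> {(round_tag c (Suc r), j, enc v j) | j. j \<in> C}" for e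
      using read_put_value[OF Suc.IH read_start(2)]
    proof (elim disjE exE conjE)
      fix \<omega> p' assume "write_put_at \<omega> p'" "p' < n" "op_tag \<omega> = round_tag c (Suc r)" "v = written_val run \<omega>"
      then show ?thesis using that
        by (intro disjI2 exI[of _ \<omega>] exI[of _ p']) (auto simp: etag_def eelem_def eidx_def)
    qed (use that in \<open>auto simp: etag_def eelem_def eidx_def\<close>)
    ultimately show ?thesis by (rule new)
  qed
qed

section \<open>Linearization by tags\<close>

lemma client_recv_Idle: "phs s c = Idle \<Longrightarrow> client_recv C k enc dec c j m s = s"
  by (simp add: client_recv_def)

lemma invoked_unique:
  assumes "invoked run c i" "invoked run c' i"
  shows "c = c'"
  using run_step[of i]
proof (cases rule: next_step_cases)
  case (invoke c0 ph qm)
  have "x = c0" if "invoked run x i" for x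
    using that invoke(3) unfolding invoked_def by (cases "x = c0") (simp_all add: invoke_simps)
  then show ?thesis using assms by blast
next
  case (node j src m)
  then show ?thesis using assms node_recv_fields[OF node(3)] unfolding invoked_def by simp
next
  case (client c0 j m)
  have "phs (run (Suc i)) x = Idle" if "phs (run i) x = Idle" for x
  proof (cases "x = c0")
    case True
    then have "run (Suc i) = (run i)\<lparr>toClient := toClient (run i) - {(c0, j, m)}\<rparr>"
      using client(2) that client_recv_Idle[of "(run i)\<lparr>toClient := toClient (run i) - {(c0, j, m)}\<rparr>" c0]
      by simp
    then show ?thesis using that by simp
  qed (use client_recv_frame[OF client(2)] that in auto)
  then show ?thesis using assms unfolding invoked_def by blast
next
  case byz
  then show ?thesis using assms unfolding invoked_def by (cases rule: byz_step_cases) auto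
qed (use assms in \<open>simp add: invoked_def\<close>)

lemma ops_before_finite: "finite {\<pi> \<in> ops run. snd \<pi> < N}"
proof (rule finite_subset)
  show "{\<pi> \<in> ops run. snd \<pi> < N} \<subseteq> (\<lambda>i. (SOME c. invoked run c i, i)) ` {..<N}"
  proof
    fix \<pi> assume \<pi>: "\<pi> \<in> {\<pi> \<in> ops run. snd \<pi> < N}"
    then obtain c i where "\<pi> = (c, i)" "invoked run c i" "i < N" unfolding ops_def by auto
    moreover then have "(SOME c. invoked run c i) = c" using invoked_unique by (metis someI)
    ultimately show "\<pi> \<in> (\<lambda>i. (SOME c. invoked run c i, i)) ` {..<N}" by force
  qed
qed simp

lemma signed_tag_ge_initial:
  assumes "e \<in> signed (run n)"
  shows "(0, w0) \<le> etag e"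
proof -
  have "etag e = (0, w0) \<or> 0 < fst (etag e)"
    using wf_signed_run[of n] assms unfolding wf_signed_def by auto
  then show ?thesis using initial_tag_less[of "etag e" w0] by auto
qed

lemma op_tag_ge_initial:
  assumes "\<pi> \<in> ops run" "complete run \<pi>"
  shows "(0, w0) \<le> op_tag \<pi>"
proof -
  obtain c i where \<pi>: "\<pi> = (c, i)" "invoked run c i" using assms(1) unfolding ops_def by auto
  have "\<exists>p v. write_put_starts p c (op_round \<pi>) v \<or> read_put_starts p c (op_round \<pi>) v"
  proof (cases "is_write run \<pi>")
    case True
    then obtain p where "write_put_at (c, i) p" using complete_write(2)[OF \<pi>(2)] assms(2) \<pi>(1) by blast
    then show ?thesis unfolding write_put_at_def \<pi>(1) by auto
  next
    case False
    then have "is_read run \<pi>" using op_kind assms(1) by blast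
    then obtain p where "read_put_at (c, i) p (returned_val run (c, i))"
      using complete_read(2)[OF \<pi>(2)] assms(2) \<pi>(1) by blast
    then show ?thesis unfolding read_put_at_def \<pi>(1) by auto
  qed
  then obtain p v where "write_put_starts p c (op_round \<pi>) v \<or> read_put_starts p c (op_round \<pi>) v" by blast
  moreover obtain j where "j \<in> C" using C_nonempty by blast
  ultimately have "(op_tag \<pi>, j, enc v j) \<in> signed (run (Suc p))"
    unfolding write_put_starts_def read_put_starts_def op_tag_def \<pi>(1) by auto
  from signed_tag_ge_initial[OF this] show ?thesis by (simp add: etag_def)
qed

lemma write_put_at_op: "write_put_at \<omega> p \<Longrightarrow> \<omega> \<in> ops run \<and> is_write run \<omega>"
  unfolding write_put_at_def ops_def by (cases \<omega>) auto

text \<open>Every tag above \<open>tm\<close> in an honest list is the tag of a write concurrent with the read: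
  its put-data starts before the read responds and it does not complete before the read.\<close>
lemma few_tags_above:
  assumes "bounded_write_concurrency \<delta> run" "\<rho> \<in> ops run" "is_read run \<rho>"
    "p < resp_time run \<rho>" "(0, w0) \<le> tm"
    "\<And>\<pi>. \<pi> \<in> ops run \<Longrightarrow> completes_before run \<pi> \<rho> \<Longrightarrow> op_tag \<pi> \<le> tm"
    "j \<in> C - Byz" "i' \<le> p"
  shows "card {x \<in> etag ` lists (run i') j. tm < x} \<le> \<delta>"
proof -
  define W where "W = {\<omega> \<in> ops run. is_write run \<omega> \<and> concurrent run \<omega> \<rho>}"
  have W: "finite W" "card W \<le> \<delta>"
    using assms(1-3) unfolding bounded_write_concurrency_def W_def by blast+
  have "x \<in> op_tag ` W" if x: "x \<in> {x \<in> etag ` lists (run i') j. tm < x}" for x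
  proof -
    obtain e where e: "e \<in> lists (run i') j" "etag e = x" "tm < x" using x by blast
    have signed: "e \<in> signed (run i')" using wf_lists_run[of i'] assms(7) e(1) unfolding wf_lists_def by blast
    have "x \<noteq> (0, w0)" using e(3) assms(5) by auto
    then obtain \<omega> p' where \<omega>: "write_put_at \<omega> p'" "p' < i'" "op_tag \<omega> = x"
      using signed_origin_tag(3)[OF signed_origin_run signed e(2)] by blast
    have op: "\<omega> \<in> ops run" "is_write run \<omega>" using write_put_at_op[OF \<omega>(1)] by auto
    have not_before: "\<not> completes_before run \<omega> \<rho>"
    proof
      assume "completes_before run \<omega> \<rho>"
      then have "op_tag \<omega> \<le> tm" using assms(6) op(1) by blast
      then show False using \<omega>(3) e(3) by simp
    qed
    have "snd \<omega> < resp_time run \<rho>" using \<omega>(1,2) assms(4,8) unfolding write_put_at_def by simp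
    then have "\<not> completes_before run \<rho> \<omega>" unfolding completes_before_def by simp
    then have "\<omega> \<in> W" using not_before op unfolding W_def concurrent_def by blast
    then show ?thesis using \<omega>(3) by blast
  qed
  then have "card {x \<in> etag ` lists (run i') j. tm < x} \<le> card (op_tag ` W)"
    using W(1) by (intro card_mono subsetI) auto
  also have "\<dots> \<le> card W" using W(1) by (rule card_image_le)
  finally show ?thesis using W(2) by linarith
qed

lemma complete_stored:
  assumes "\<pi> \<in> ops run" "complete run \<pi>"
  shows "stored_at (resp_time run \<pi>) (op_tag \<pi>)"
proof -
  obtain c i where \<pi>: "\<pi> = (c, i)" "invoked run c i" using assms(1) unfolding ops_def by auto
  then show ?thesis using op_kind[OF assms(1)] complete_write(1) complete_read(1) assms(2) by blast
qed

lemma write_tag_gt_completed: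
  assumes "write_put_at \<omega> p" "\<pi> \<in> ops run" "completes_before run \<pi> \<omega>"
  shows "op_tag \<pi> < op_tag \<omega>"
  using write_tag_gt[of "fst \<omega>" "snd \<omega>"] assms complete_stored[OF assms(2)]
  unfolding completes_before_def by simp

lemma read_tag_ge_completed:
  assumes "bounded_write_concurrency \<delta> run" "\<rho> \<in> ops run" "is_read run \<rho>" "complete run \<rho>"
    "\<pi> \<in> ops run" "completes_before run \<pi> \<rho>"
  shows "op_tag \<pi> \<le> op_tag \<rho>"
proof -
  obtain c i where \<rho>: "\<rho> = (c, i)" "invoked run c i" using assms(2) unfolding ops_def by auto
  obtain p where p: "p < resp_time run \<rho>" "read_put_at (c, i) p (returned_val run \<rho>)"
    using complete_read(2)[OF \<rho>(2)] assms(3,4) \<rho>(1) by blast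
  define S where "S = {\<pi> \<in> ops run. completes_before run \<pi> \<rho>}"
  have "S \<subseteq> {\<pi> \<in> ops run. snd \<pi> < snd \<rho>}"
  proof
    fix \<pi>' assume "\<pi>' \<in> S"
    moreover obtain c' i' where "\<pi>' = (c', i')" by fastforce
    ultimately show "\<pi>' \<in> {\<pi> \<in> ops run. snd \<pi> < snd \<rho>}"
      using resp_time(1)[of c' i'] unfolding S_def completes_before_def by auto
  qed
  then have "finite S" using ops_before_finite by (rule finite_subset)
  moreover have "\<pi> \<in> S" using assms(5,6) unfolding S_def by simp
  ultimately have "Max (op_tag ` S) \<in> op_tag ` S" by (intro Max_in) auto
  then obtain \<pi>m where \<pi>m: "\<pi>m \<in> S" "op_tag \<pi>m = Max (op_tag ` S)" by (metis imageE)
  define tm where "tm = Max (op_tag ` S)"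
  have below: "op_tag \<pi>' \<le> tm" if "\<pi>' \<in> ops run" "completes_before run \<pi>' \<rho>" for \<pi>'
    using that \<open>finite S\<close> unfolding tm_def S_def by simp
  have \<pi>m_ops: "\<pi>m \<in> ops run" "complete run \<pi>m" "resp_time run \<pi>m < i"
    using \<pi>m(1) \<rho>(1) unfolding S_def completes_before_def by auto
  have tm: "stored_at (resp_time run \<pi>m) tm" "(0, w0) \<le> tm"
    using complete_stored[OF \<pi>m_ops(1,2)] op_tag_ge_initial[OF \<pi>m_ops(1,2)] \<pi>m(2) tm_def by simp_all
  have "tm \<le> op_tag (c, i)"
  proof (rule read_tag_ge[OF p(2) tm(1)])
    show "card {x \<in> etag ` lists (run i') j. tm < x} \<le> \<delta>" if "j \<in> C - Byz" "i < i'" "i' \<le> p" for j i'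
      using few_tags_above[OF assms(1-3) p(1) tm(2) below that(1,3)] .
  qed (use \<pi>m_ops(3) in simp)
  then show ?thesis using below[OF assms(5,6)] \<rho>(1) by simp
qed

text \<open>Incomplete writes that reached their put-data phase are kept: their value may
  already be returned by reads.\<close>
definition lin_ops :: "'w op set" where
  "lin_ops = {\<pi> \<in> ops run. complete run \<pi>} \<union>
     {\<omega> \<in> ops run. is_write run \<omega> \<and> \<not> complete run \<omega> \<and> (\<exists>p. write_put_at \<omega> p)}"

definition tag_prec :: "('w op \<times> 'w op) set" where
  "tag_prec = {(a, b). a \<in> lin_ops \<and> b \<in> lin_ops \<and>
     (op_tag a < op_tag b \<or> (op_tag a = op_tag b \<and> is_write run a \<and> is_read run b))}"

lemma lin_ops_write: "\<pi> \<in> lin_ops \<Longrightarrow> is_write run \<pi> \<Longrightarrow> \<exists>p. write_put_at \<pi> p"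
  unfolding lin_ops_def ops_def using complete_write(2) by fastforce

lemma lin_ops_read:
  "\<pi> \<in> lin_ops \<Longrightarrow> is_read run \<pi> \<Longrightarrow> complete run \<pi> \<and> (\<exists>p. read_put_at \<pi> p (returned_val run \<pi>))"
  unfolding lin_ops_def ops_def using complete_read(2) write_not_read by fastforce

lemma tag_prec_strict_order: "tag_prec \<subseteq> lin_ops \<times> lin_ops" "(\<pi>, \<pi>) \<notin> tag_prec" "trans tag_prec"
  unfolding tag_prec_def trans_def using write_not_read by auto

lemma tag_prec_real_time:
  assumes "bounded_write_concurrency \<delta> run" "\<pi>1 \<in> lin_ops" "\<pi>2 \<in> lin_ops" "completes_before run \<pi>1 \<pi>2"
  shows "(\<pi>2, \<pi>1) \<notin> tag_prec"
proof -
  have ops: "\<pi>1 \<in> ops run" "\<pi>2 \<in> ops run" using assms(2,3) unfolding lin_ops_def by auto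
  consider "is_write run \<pi>2" | "is_read run \<pi>2" using op_kind[OF ops(2)] by blast
  then show ?thesis
  proof cases
    case 1
    then obtain p where "write_put_at \<pi>2 p" using lin_ops_write[OF assms(3)] by blast
    then have "op_tag \<pi>1 < op_tag \<pi>2" using write_tag_gt_completed ops(1) assms(4) by blast
    then show ?thesis unfolding tag_prec_def by auto
  next
    case 2
    then have "op_tag \<pi>1 \<le> op_tag \<pi>2"
      using read_tag_ge_completed[OF assms(1) ops(2) 2 _ ops(1) assms(4)] lin_ops_read[OF assms(3)] by blast
    then show ?thesis using 2 write_not_read[of \<pi>2] unfolding tag_prec_def by auto
  qed
qed

lemma tag_prec_writes_total:
  assumes "\<pi> \<in> lin_ops" "\<pi>' \<in> lin_ops" "is_write run \<pi>" "\<pi> \<noteq> \<pi>'"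
  shows "(\<pi>, \<pi>') \<in> tag_prec \<or> (\<pi>', \<pi>) \<in> tag_prec"
proof (cases "op_tag \<pi> = op_tag \<pi>'")
  case True
  have "\<not> is_write run \<pi>'"
  proof
    assume "is_write run \<pi>'"
    then obtain p p' where "write_put_at \<pi> p" "write_put_at \<pi>' p'" using lin_ops_write assms by blast
    then show False using write_tags_unique True assms(4) by blast
  qed
  then have "is_read run \<pi>'" using op_kind assms(2) unfolding lin_ops_def by blast
  then show ?thesis using True assms(1-3) unfolding tag_prec_def by auto
next
  case False
  then show ?thesis using assms(1,2) unfolding tag_prec_def by (auto simp: neq_iff)
qed

lemma tag_prec_read_value:
  assumes "\<rho> \<in> lin_ops" "is_read run \<rho>"
  shows "(\<exists>\<omega> \<in> lin_ops. is_write run \<omega> \<and> (\<omega>, \<rho>) \<in> tag_prec \<and>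
      (\<forall>\<omega>' \<in> lin_ops. is_write run \<omega>' \<and> (\<omega>', \<rho>) \<in> tag_prec \<longrightarrow> \<omega>' = \<omega> \<or> (\<omega>', \<omega>) \<in> tag_prec) \<and>
      returned_val run \<rho> = written_val run \<omega>)
    \<or> ((\<forall>\<omega> \<in> lin_ops. is_write run \<omega> \<longrightarrow> (\<omega>, \<rho>) \<notin> tag_prec) \<and> returned_val run \<rho> = v0)"
proof -
  have write_tag_pos: "(0, w0) < op_tag \<omega>" if "\<omega> \<in> lin_ops" "is_write run \<omega>" for \<omega>
    using lin_ops_write[OF that] write_tag(2) initial_tag_less by blast
  obtain p where "read_put_at \<rho> p (returned_val run \<rho>)" using lin_ops_read[OF assms] by blast
  then have "read_put_starts p (fst \<rho>) (op_round \<rho>) (returned_val run \<rho>)"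
    unfolding read_put_at_def by blast
  from read_put_value[OF signed_origin_run this] show ?thesis
    unfolding op_tag_def[symmetric]
  proof (elim disjE exE conjE)
    assume "op_tag \<rho> = (0, w0)" "returned_val run \<rho> = v0"
    then show ?thesis using write_tag_pos unfolding tag_prec_def by fastforce
  next
    fix \<omega> p' assume \<omega>: "write_put_at \<omega> p'" "op_tag \<omega> = op_tag \<rho>" "returned_val run \<rho> = written_val run \<omega>"
    then have \<omega>_lin: "\<omega> \<in> lin_ops" "is_write run \<omega>" using write_put_at_op unfolding lin_ops_def by blast+
    have "\<omega>' = \<omega> \<or> (\<omega>', \<omega>) \<in> tag_prec"
      if \<omega>': "\<omega>' \<in> lin_ops" "is_write run \<omega>'" "(\<omega>', \<rho>) \<in> tag_prec" for \<omega>'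
    proof (cases "op_tag \<omega>' = op_tag \<omega>")
      case True
      obtain p'' where "write_put_at \<omega>' p''" using lin_ops_write \<omega>'(1,2) by blast
      then show ?thesis using write_tags_unique \<omega>(1) True by blast
    next
      case False
      then have "op_tag \<omega>' < op_tag \<omega>" using \<omega>'(3) \<omega>(2) unfolding tag_prec_def by auto
      then show ?thesis using \<omega>'(1) \<omega>_lin(1) unfolding tag_prec_def by blast
    qed
    moreover have "(\<omega>, \<rho>) \<in> tag_prec" using \<omega>_lin \<omega>(2) assms unfolding tag_prec_def by blast
    ultimately show ?thesis using \<omega>_lin \<omega>(3) by blast
  qed
qed

lemma atomic:
  assumes "bounded_write_concurrency \<delta> run"
  shows "atomic_register v0 run"
  unfolding atomic_register_def Let_def
proof (intro exI[of _ "{\<omega> \<in> ops run. is_write run \<omega> \<and> \<not> complete run \<omega> \<and> (\<exists>p. write_put_at \<omega> p)}"]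
    exI[of _ tag_prec] conjI, unfold lin_ops_def[symmetric])
qed (use tag_prec_strict_order tag_prec_real_time[OF assms] tag_prec_writes_total tag_prec_read_value
      in blast)+

end

theorem mainTheorem9:
  fixes C Byz :: "'n set" and b k \<delta> :: nat
    and enc :: "'v \<Rightarrow> 'n \<Rightarrow> 'e" and dec :: "('n \<times> 'e) set \<Rightarrow> 'v"
    and v0 :: 'v and w0 :: "'w::linorder"
    and run :: "nat \<Rightarrow> ('n,'w,'v,'e) gstate"
  assumes "finite C"
    and "Byz \<subseteq> C" and "card Byz \<le> b"
    and "real b < (real (card C) - real k) / 3"
    and "1 \<le> k" and "k \<le> card C"
    and "1 \<le> \<delta>"
    and "mds_code C k enc dec"
    and "execution C Byz k \<delta> enc dec v0 w0 run"
    and "bounded_write_concurrency \<delta> run"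
  shows "atomic_register v0 run"
proof -
  have "real (card Byz) \<le> real b" using assms(3) by simp
  moreover have "3 * real b < real (card C) - real k" using assms(4) by (simp add: field_simps)
  ultimately have "3 * card Byz + k < card C" by linarith
  then interpret protocol_run C Byz k \<delta> enc dec v0 w0 run
    using assms by unfold_locales auto
  show ?thesis using atomic assms(10) .
qed

end
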